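(* Let $p,q$ be odd primes with $q-p=2$, let $K=\mathbb{Q}(\sqrt{D})$ with $D\in\{-11,-19,-43,-67,-163\}$, and assume $p$ and $q$ are both inert in $K$. Let $\varepsilon\in\{1,-1\}$, $E=E_\varepsilon: y^2=x(x+\varepsilon p)(x+\varepsilon q)$, $E'=E'_\varepsilon: y^2=x^3-2\varepsilon(p+q)x^2+4x$. Then: (1) if $d\in K(S,2)$ satisfies one of (a) $p\mid d$, (b) $q\mid d$, (c) $d=-1$, then $d\notin S^{(\varphi)}(E/K)$; (2) (a) $2\in S^{(\varphi)}(E/K)$ iff $p\equiv 3\pmod 4$; (b) $-2\in S^{(\varphi)}(E/K)$ iff $p\equiv 1\pmod 4$; (1$'$) if $d\in K(S,2)$ satisfies $2\mid d$, then $d\notin S^{(\widehat\varphi)}(E'/K)$; (2$'$) $-1,p,q\in S^{(\widehat\varphi)}(E'/K)$.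
   Context: $\varphi:E\to E'$, $(x,y)\mapsto(y^2/x^2,y(pq-x^2)/x^2)$, and its dual $\widehat\varphi:E'\to E$, $(x,y)\mapsto(y^2/(4x^2),y(4-x^2)/(8x^2))$. Here $2$ is inert in $K$. Let $S=\{\infty\}\cup\{$primes of $K$ dividing $2pq\}$ and $K(S,2)=\{d\in K^*/K^{*2}:\ \mathrm{ord}_v(d)$ even for all $v\notin S\}=\langle -1,2,p,q\rangle$. The Selmer groups are identified with $S^{(\varphi)}(E/K)=\{d\in K(S,2): C_d(K_v)\neq\emptyset\ \forall v\in S\}$ and $S^{(\widehat\varphi)}(E'/K)=\{d\in K(S,2): C'_d(K_v)\neq\emptyset\ \forall v\in S\}$, where $C_d: dw^2=d^2-2\varepsilon(p+q)dz^2+4z^4$ and $C'_d: dw^2=d^2+\varepsilon(p+q)dz^2+pqz^4$. "$\pi\mid d$" means $\mathrm{ord}_\pi(d)$ is odd. *)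

theory Defs
  imports Complex_Main "HOL-Computational_Algebra.Primes" "HOL-Number_Theory.Cong"
begin

(* K = Q(sqrt D) realised inside the complex numbers, with O_K = Z[omega],
   omega = (1 + sqrt D)/2  (D = 1 mod 4, D < 0). *)
definition omega :: "int \<Rightarrow> complex" where
  "omega D = Complex (1/2) (sqrt (real_of_int (- D)) / 2)"

definition Kf :: "int \<Rightarrow> complex set" where
  "Kf D = {x. \<exists>a b :: rat. x = of_rat a + of_rat b * omega D}"

definition kcoord :: "int \<Rightarrow> complex \<Rightarrow> rat \<times> rat" where
  "kcoord D x = (SOME (a, b). x = of_rat a + of_rat b * omega D)"

(* a prime l is inert in K: the minimal polynomial X^2 - X + (1-D)/4 of omega
   is irreducible mod l (Dedekind-Kummer, O_K = Z[omega]) *)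
definition inert :: "int \<Rightarrow> nat \<Rightarrow> bool" where
  "inert D l \<longleftrightarrow> prime l \<and>
     \<not> (\<exists>x::int. [x^2 - x + (1 - D) div 4 = 0] (mod int l))"

definition qord :: "nat \<Rightarrow> rat \<Rightarrow> int" where
  "qord l r = (case quotient_of r of (a, b) \<Rightarrow>
      int (multiplicity (int l) a) - int (multiplicity (int l) b))"

(* ord_pi for the unique prime pi = (l) of K above an inert prime l:
   ord(a + b omega) = min(ord_l a, ord_l b) *)
definition ordv :: "int \<Rightarrow> nat \<Rightarrow> complex \<Rightarrow> int" where
  "ordv D l x = (case kcoord D x of (a, b) \<Rightarrow>
      if a = 0 then qord l b else if b = 0 then qord l a
      else min (qord l a) (qord l b))"

definition absv :: "int \<Rightarrow> nat \<Rightarrow> complex \<Rightarrow> real" where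
  "absv D l x = (if x = 0 then 0 else real l powr (- real_of_int (ordv D l x)))"

definition cauchy_v :: "int \<Rightarrow> nat \<Rightarrow> (nat \<Rightarrow> complex) \<Rightarrow> bool" where
  "cauchy_v D l s \<longleftrightarrow> (\<forall>e>0. \<exists>N. \<forall>m\<ge>N. \<forall>n\<ge>N. absv D l (s m - s n) < e)"

(* the curve d w^2 = g d z has a point over the completion K_v (v above inert l):
   there is a v-adically Cauchy sequence of K-points (z_n, w_n) (hence converging
   in K_v^2) whose residual tends to 0 v-adically, i.e. the limit is a K_v-point. *)
definition loc_sol :: "int \<Rightarrow> nat \<Rightarrow> (complex \<Rightarrow> complex \<Rightarrow> complex) \<Rightarrow> complex \<Rightarrow> bool" where
  "loc_sol D l g d \<longleftrightarrow> (\<exists>z w :: nat \<Rightarrow> complex.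
      (\<forall>n. z n \<in> Kf D \<and> w n \<in> Kf D) \<and> cauchy_v D l z \<and> cauchy_v D l w \<and>
      (\<lambda>n. absv D l (d * (w n)^2 - g d (z n))) \<longlonglongrightarrow> 0)"

(* the point over K_infinity = C *)
definition inf_sol :: "(complex \<Rightarrow> complex \<Rightarrow> complex) \<Rightarrow> complex \<Rightarrow> bool" where
  "inf_sol g d \<longleftrightarrow> (\<exists>z w :: complex. d * w^2 = g d z)"

(* K(S,2) = <-1, 2, p, q> inside K^*/K^*2; elements represented by d \<in> K^* *)
definition KS2 :: "int \<Rightarrow> nat \<Rightarrow> nat \<Rightarrow> complex set" where
  "KS2 D p q = {d \<in> Kf D. d \<noteq> 0 \<and> (\<exists>e a b c :: nat. \<exists>t \<in> Kf D. t \<noteq> 0 \<and>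
       d = (-1)^e * 2^a * (of_nat p)^b * (of_nat q)^c * t^2)}"

definition gphi :: "int \<Rightarrow> nat \<Rightarrow> nat \<Rightarrow> complex \<Rightarrow> complex \<Rightarrow> complex" where
  "gphi eps p q d z = d^2 - 2 * of_int eps * (of_nat p + of_nat q) * d * z^2 + 4 * z^4"

definition gphihat :: "int \<Rightarrow> nat \<Rightarrow> nat \<Rightarrow> complex \<Rightarrow> complex \<Rightarrow> complex" where
  "gphihat eps p q d z = d^2 + of_int eps * (of_nat p + of_nat q) * d * z^2
      + of_nat p * of_nat q * z^4"

(* S = {infinity, (2), (p), (q)} (2, p, q inert in K) *)
definition Sel_phi :: "int \<Rightarrow> int \<Rightarrow> nat \<Rightarrow> nat \<Rightarrow> complex set" where
  "Sel_phi D eps p q = {d \<in> KS2 D p q. inf_sol (gphi eps p q) d \<and>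
      (\<forall>l \<in> {2, p, q}. loc_sol D l (gphi eps p q) d)}"

definition Sel_phihat :: "int \<Rightarrow> int \<Rightarrow> nat \<Rightarrow> nat \<Rightarrow> complex set" where
  "Sel_phihat D eps p q = {d \<in> KS2 D p q. inf_sol (gphihat eps p q) d \<and>
      (\<forall>l \<in> {2, p, q}. loc_sol D l (gphihat eps p q) d)}"

end

(* Every claim is local.  Non-membership is proved at one place v of S by bounding the
   v-adic valuation of the residual d w^2 - g_d(z) from above, uniformly over all K-points,
   so that no v-adic limit of K-points lies on the curve: at p or q when ord_v d is odd
   (then d w^2 has odd and g_d(z) even valuation), and at 2 for d = -t^2
   and d = 2, -2, where it comes down to -1 not being a square modulo 4 and to the residue
   field at 2 having four elements.  Membership is proved by a point of the curve over
   K(sqrt c), for an integer c that is a unit at v (and 1 modulo 4 if v = 2): as l is inert,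
   D is not a square modulo l, so c or c D is an l-adic square by Hensel's lemma, and as D
   is a square in K, c is a square in K_v. *)

theory Submission
  imports Defs "HOL-Number_Theory.Number_Theory"
begin

section \<open>Arithmetic of \<open>\<int>[\<omega>]\<close> in coordinates\<close>

locale quad_field =
  fixes D :: int
  assumes D_neg: "D < 0" and D_mod_4: "D mod 4 = 1"
begin

definition N_omega :: int where "N_omega = (1 - D) div 4"

lemma four_N_omega: "4 * N_omega = 1 - D"
  using D_mod_4 unfolding N_omega_def by presburger

lemma N_omega_pos: "N_omega > 0"
  using four_N_omega D_neg by linarith

definition kelem :: "rat \<Rightarrow> rat \<Rightarrow> complex" where
  "kelem a b = of_rat a + of_rat b * omega D"

definition knorm :: "rat \<Rightarrow> rat \<Rightarrow> rat" where
  "knorm a b = a^2 + a*b + of_int N_omega * b^2"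

definition sqrtD :: complex where "sqrtD = 2 * omega D - 1"

lemma omega_eq: "omega D = Complex (1/2) (sqrt (- real_of_int D) / 2)"
  unfolding omega_def by simp

lemma of_rat_complex: "(of_rat a :: complex) = complex_of_real (of_rat a)"
proof -
  obtain n d where q: "quotient_of a = (n, d)" by (cases "quotient_of a") auto
  have "a = of_int n / of_int d" by (rule quotient_of_div[OF q])
  thus ?thesis by (simp add: of_rat_divide)
qed

lemma kelem_inj: assumes "kelem a b = kelem c d" shows "a = c \<and> b = d"
proof -
  have s: "sqrt (- real_of_int D) > 0" using D_neg by simp
  have "Im (kelem a b) = Im (kelem c d)" using assms by simp
  hence bd: "b = d" using s unfolding kelem_def omega_eq by (simp add: of_rat_complex)
  have "Re (kelem a b) = Re (kelem c d)" using assms by simp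
  hence "a = c" using bd unfolding kelem_def omega_eq by (simp add: of_rat_complex)
  thus ?thesis using bd by simp
qed

lemma kcoord_kelem [simp]: "kcoord D (kelem a b) = (a, b)"
proof -
  have "\<exists>p. case p of (a', b') \<Rightarrow> kelem a b = of_rat a' + of_rat b' * omega D"
    by (rule exI[of _ "(a, b)"]) (simp add: kelem_def)
  hence "case kcoord D (kelem a b) of (a', b') \<Rightarrow> kelem a b = of_rat a' + of_rat b' * omega D"
    unfolding kcoord_def by (rule someI_ex)
  hence "kelem a b = kelem (fst (kcoord D (kelem a b))) (snd (kcoord D (kelem a b)))"
    by (simp add: kelem_def split: prod.splits)
  from kelem_inj[OF this] show ?thesis by (simp add: prod_eq_iff)
qed

lemma Kf_iff: "x \<in> Kf D \<longleftrightarrow> (\<exists>a b. x = kelem a b)"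
  unfolding Kf_def kelem_def by simp

lemma KfE: assumes "x \<in> Kf D" obtains a b where "x = kelem a b"
  using assms Kf_iff by blast

lemma kelem_in_Kf [simp]: "kelem a b \<in> Kf D"
  using Kf_iff by blast

lemma omega_sq: "omega D ^ 2 = omega D - of_int N_omega"
proof -
  have "4 * real_of_int N_omega = 1 - real_of_int D" using four_N_omega by linarith
  thus ?thesis using D_neg unfolding omega_eq
    by (simp add: power2_eq_square complex_eq_iff field_simps)
qed

lemma sqrtD_sq: "sqrtD ^ 2 = of_int D"
proof -
  have "(4::complex) * of_int N_omega = 1 - of_int D"
    using arg_cong[OF four_N_omega, of "of_int :: int \<Rightarrow> complex"] by simp
  moreover have "sqrtD ^ 2 = 4 * omega D ^ 2 - 4 * omega D + 1"
    unfolding sqrtD_def by (simp add: power2_eq_square algebra_simps)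
  ultimately show ?thesis unfolding omega_sq by (simp add: right_diff_distrib)
qed

lemma kelem_add: "kelem a b + kelem c d = kelem (a + c) (b + d)"
  unfolding kelem_def by (simp add: of_rat_add algebra_simps)

lemma kelem_diff: "kelem a b - kelem c d = kelem (a - c) (b - d)"
  unfolding kelem_def by (simp add: of_rat_diff algebra_simps)

lemma kelem_uminus: "- kelem a b = kelem (- a) (- b)"
  unfolding kelem_def by (simp add: of_rat_minus algebra_simps)

lemma kelem_mult:
  "kelem a b * kelem c d = kelem (a*c - of_int N_omega*b*d) (a*d + b*c + b*d)"
proof -
  have "kelem a b * kelem c d = of_rat a * of_rat c
      + (of_rat a * of_rat d + of_rat b * of_rat c) * omega D + of_rat b * of_rat d * omega D ^ 2"
    unfolding kelem_def by (simp add: algebra_simps power2_eq_square)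
  thus ?thesis
    unfolding omega_sq kelem_def by (simp add: of_rat_add of_rat_mult of_rat_diff algebra_simps)
qed

lemma kelem_eq_0_iff: "kelem a b = 0 \<longleftrightarrow> a = 0 \<and> b = 0"
proof
  assume "kelem a b = 0"
  hence "kelem a b = kelem 0 0" by (simp add: kelem_def)
  thus "a = 0 \<and> b = 0" by (rule kelem_inj)
qed (simp add: kelem_def)

lemma of_int_kelem: "of_int n = kelem (of_int n) 0"
  unfolding kelem_def by simp

lemma knorm_pos: assumes "\<not> (a = 0 \<and> b = 0)" shows "knorm a b > 0"
proof -
  have N1: "of_int N_omega \<ge> (1::rat)" using N_omega_pos by simp
  have "knorm a b = (a + b/2)^2 + (of_int N_omega - 1/4) * b^2"
    unfolding knorm_def by (simp add: algebra_simps power2_eq_square)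
  moreover have "(a + b/2)^2 + (of_int N_omega - 1/4) * b^2 > 0"
  proof (cases "b = 0")
    case True thus ?thesis using assms by simp
  next
    case False
    hence "(of_int N_omega - 1/4) * b^2 > 0" using N1 by (intro mult_pos_pos) auto
    thus ?thesis by (rule add_nonneg_pos[rotated]) simp
  qed
  ultimately show ?thesis by simp
qed

lemma knorm_mult:
  "knorm (a*c - of_int N_omega*b*d) (a*d + b*c + b*d) = knorm a b * knorm c d"
  unfolding knorm_def by (simp add: algebra_simps power2_eq_square)

lemma kelem_inverse:
  assumes "\<not> (a = 0 \<and> b = 0)"
  shows "inverse (kelem a b) = kelem ((a + b) / knorm a b) (- b / knorm a b)"
proof -
  have N: "knorm a b \<noteq> 0" using knorm_pos[OF assms] by simp
  have re: "a * ((a + b) / knorm a b) - of_int N_omega * b * (- b / knorm a b) = 1"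
    using N by (simp add: field_simps) (simp add: knorm_def algebra_simps power2_eq_square)
  have im: "a * (- b / knorm a b) + b * ((a + b) / knorm a b) + b * (- b / knorm a b) = 0"
    using N by (simp add: field_simps)
  have "kelem a b * kelem ((a + b) / knorm a b) (- b / knorm a b) = 1"
    unfolding kelem_mult re im by (simp add: kelem_def)
  thus ?thesis by (rule inverse_unique)
qed

lemma Kf_add [simp]: "x \<in> Kf D \<Longrightarrow> y \<in> Kf D \<Longrightarrow> x + y \<in> Kf D"
  by (auto elim!: KfE simp: kelem_add)

lemma Kf_diff [simp]: "x \<in> Kf D \<Longrightarrow> y \<in> Kf D \<Longrightarrow> x - y \<in> Kf D"
  by (auto elim!: KfE simp: kelem_diff)

lemma Kf_uminus [simp]: "x \<in> Kf D \<Longrightarrow> - x \<in> Kf D"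
  by (auto elim!: KfE simp: kelem_uminus)

lemma Kf_mult [simp]: "x \<in> Kf D \<Longrightarrow> y \<in> Kf D \<Longrightarrow> x * y \<in> Kf D"
  by (auto elim!: KfE simp: kelem_mult)

lemma Kf_of_int [simp]: "of_int n \<in> Kf D"
  by (simp add: of_int_kelem)

lemma Kf_of_nat [simp]: "of_nat n \<in> Kf D"
  using Kf_of_int[of "int n"] by simp

lemma Kf_numeral [simp]: "numeral n \<in> Kf D"
  using Kf_of_int[of "numeral n"] by simp

lemma Kf_0 [simp]: "0 \<in> Kf D" and Kf_1 [simp]: "1 \<in> Kf D"
  using Kf_of_int[of 0] Kf_of_int[of 1] by simp_all

lemma Kf_power [simp]: "x \<in> Kf D \<Longrightarrow> x ^ n \<in> Kf D"
  by (induction n) auto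

lemma Kf_inverse [simp]: assumes "x \<in> Kf D" shows "inverse x \<in> Kf D"
proof (cases "x = 0")
  case False
  then obtain a b where x: "x = kelem a b" "\<not> (a = 0 \<and> b = 0)"
    using assms kelem_eq_0_iff by (metis KfE)
  show ?thesis unfolding x(1) kelem_inverse[OF x(2)] by simp
qed simp

lemma Kf_divide [simp]: "x \<in> Kf D \<Longrightarrow> y \<in> Kf D \<Longrightarrow> x / y \<in> Kf D"
  by (simp add: divide_inverse)

lemma sqrtD_in_Kf [simp]: "sqrtD \<in> Kf D"
  using kelem_in_Kf[of "-1" 2] unfolding sqrtD_def kelem_def by simp

end

section \<open>The \<open>l\<close>-adic valuation on \<open>\<rat>\<close>\<close>

abbreviation mult_at :: "nat \<Rightarrow> int \<Rightarrow> nat" where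
  "mult_at l x \<equiv> multiplicity (int l) x"

lemma rat_as_int_frac: fixes r :: rat obtains A B where "r = of_int A / of_int B" "B > 0"
proof -
  obtain n d where q: "quotient_of r = (n, d)" by (cases "quotient_of r") auto
  show ?thesis using that quotient_of_div[OF q] quotient_of_denom_pos[OF q] by blast
qed

lemma qord_frac:
  assumes l: "prime l" and A: "A \<noteq> 0" and B: "B > 0"
  shows "qord l (of_int A / of_int B) = int (mult_at l A) - int (mult_at l B)"
proof -
  define r :: rat where "r = of_int A / of_int B"
  obtain n d where q: "quotient_of r = (n, d)" by (cases "quotient_of r") auto
  have rd: "r = of_int n / of_int d" by (rule quotient_of_div[OF q])
  have d: "d > 0" by (rule quotient_of_denom_pos[OF q])
  have "r \<noteq> 0" using A B unfolding r_def by simp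
  hence n: "n \<noteq> 0" using rd by auto
  have "rat_of_int A * of_int d = of_int n * of_int B"
    using rd B d unfolding r_def by (simp add: field_simps)
  hence "A * d = n * B" by (metis of_int_eq_iff of_int_mult)
  hence "mult_at l (A * d) = mult_at l (n * B)" by simp
  hence "mult_at l A + mult_at l d = mult_at l n + mult_at l B"
    using prime_elem_multiplicity_mult_distrib[of "int l"] l A B d n by simp
  thus ?thesis using q unfolding r_def[symmetric] qord_def by simp
qed

lemma qord_of_int: "prime l \<Longrightarrow> A \<noteq> 0 \<Longrightarrow> qord l (of_int A) = int (mult_at l A)"
  using qord_frac[of l A 1] by simp

lemma qord_mult:
  assumes l: "prime l" and "r \<noteq> 0" "s \<noteq> 0"
  shows "qord l (r * s) = qord l r + qord l s"
proof -
  obtain A B where r: "r = of_int A / of_int B" "B > 0" by (rule rat_as_int_frac)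
  obtain C E where s: "s = of_int C / of_int E" "E > 0" by (rule rat_as_int_frac)
  have A: "A \<noteq> 0" and C: "C \<noteq> 0" using assms r s by auto
  have rs: "r * s = of_int (A * C) / of_int (B * E)" using r s by simp
  have "qord l (r * s) = int (mult_at l (A * C)) - int (mult_at l (B * E))"
    unfolding rs using l A C r(2) s(2) by (intro qord_frac) auto
  thus ?thesis
    using qord_frac[OF l A r(2)] qord_frac[OF l C s(2)] r s A C
      prime_elem_multiplicity_mult_distrib[of "int l"] l by simp
qed

lemma qord_uminus: "qord l (- r) = qord l r"
proof -
  obtain n d where q: "quotient_of r = (n, d)" by (cases "quotient_of r") auto
  have "quotient_of (- r) = (- n, d)" using q by (simp add: rat_uminus_code)
  moreover have "mult_at l (- n) = mult_at l n"
    using multiplicity_times_unit_right[of "-1::int" "int l" n] by simp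
  ultimately show ?thesis using q unfolding qord_def by simp
qed

definition qord_ge :: "nat \<Rightarrow> int \<Rightarrow> rat \<Rightarrow> bool" where
  "qord_ge l k r \<longleftrightarrow> r = 0 \<or> qord l r \<ge> k"

lemma le_multiplicity_of_dvd:
  assumes "prime l" "x \<noteq> 0" "int l ^ j dvd x"
  shows "j \<le> mult_at l x"
proof -
  have "prime (int l)" using assms(1) by simp
  hence "\<not> is_unit (int l)" using not_prime_unit by blast
  thus ?thesis using assms(2,3) power_dvd_iff_le_multiplicity by blast
qed

lemma qord_ge_add:
  assumes l: "prime l" and "qord_ge l k r" "qord_ge l k s"
  shows "qord_ge l k (r + s)"
proof (cases "r = 0 \<or> s = 0 \<or> r + s = 0")
  case True thus ?thesis using assms by (auto simp: qord_ge_def)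
next
  case False
  obtain A B where r: "r = of_int A / of_int B" "B > 0" by (rule rat_as_int_frac)
  obtain C E where s: "s = of_int C / of_int E" "E > 0" by (rule rat_as_int_frac)
  have A: "A \<noteq> 0" and C: "C \<noteq> 0" using False r s by auto
  have kr: "int (mult_at l A) - int (mult_at l B) \<ge> k"
    using assms(2) False qord_frac[OF l A r(2)] r by (simp add: qord_ge_def)
  have ks: "int (mult_at l C) - int (mult_at l E) \<ge> k"
    using assms(3) False qord_frac[OF l C s(2)] s by (simp add: qord_ge_def)
  have rs: "r + s = of_int (A * E + C * B) / of_int (B * E)" using r s by (simp add: field_simps)
  have N: "A * E + C * B \<noteq> 0"
  proof
    assume "A * E + C * B = 0"
    hence "r + s = 0" using rs by simp
    thus False using False by simp
  qed
  define j where "j = min (mult_at l A + mult_at l E) (mult_at l C + mult_at l B)"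
  have "int l ^ (mult_at l A + mult_at l E) dvd A * E"
    by (simp add: power_add mult_dvd_mono multiplicity_dvd)
  hence "int l ^ j dvd A * E" unfolding j_def by (meson dvd_trans le_imp_power_dvd min.cobounded1)
  moreover have "int l ^ (mult_at l C + mult_at l B) dvd C * B"
    by (simp add: power_add mult_dvd_mono multiplicity_dvd)
  hence "int l ^ j dvd C * B" unfolding j_def by (meson dvd_trans le_imp_power_dvd min.cobounded2)
  ultimately have "j \<le> mult_at l (A * E + C * B)" using le_multiplicity_of_dvd[OF l N] by simp
  moreover have "qord l (r + s) = int (mult_at l (A * E + C * B)) - int (mult_at l (B * E))"
    unfolding rs using l N r(2) s(2) by (intro qord_frac) auto
  moreover have "mult_at l (B * E) = mult_at l B + mult_at l E"
    using prime_elem_multiplicity_mult_distrib[of "int l"] l r s by simp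
  ultimately show ?thesis using kr ks unfolding j_def qord_ge_def by linarith
qed

section \<open>Inert primes\<close>

lemma inert_norm_form_not_dvd:
  assumes inert: "inert D l" and N: "4 * N = 1 - D" and nd: "\<not> (int l dvd A \<and> int l dvd B)"
  shows "\<not> int l dvd A^2 + A*B + N*B^2"
proof
  assume dvd: "int l dvd A^2 + A*B + N*B^2"
  have pl: "prime (int l)" using inert by (simp add: inert_def)
  show False
  proof (cases "int l dvd B")
    case True
    hence "int l dvd A*B + N*B^2" by (simp add: power2_eq_square)
    hence "int l dvd A^2" using dvd by (metis dvd_add_left_iff add.assoc)
    hence "int l dvd A" using pl prime_dvd_power by blast
    thus False using nd True by simp
  next
    case False
    hence "coprime B (int l)" using pl prime_imp_coprime coprime_commute by blast
    then obtain t where "[B * t = 1] (mod int l)" using cong_solve_coprime_int by blast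
    hence lt: "int l dvd B*t - 1" by (simp add: cong_iff_dvd_diff)
    \<comment> \<open>\<open>x = -A/B\<close> would be a root of \<open>X\<^sup>2 - X + N\<close> modulo \<open>l\<close>\<close>
    define x where "x = - A * t"
    have "B^2 * (x^2 - x + N) = (A^2 + A*B + N*B^2) + (B*t - 1) * (A^2 * (B*t + 1) + A*B)"
      unfolding x_def by (simp add: algebra_simps power2_eq_square)
    hence "int l dvd B^2 * (x^2 - x + N)" using dvd lt by simp
    moreover have "\<not> int l dvd B^2" using False pl prime_dvd_power by blast
    ultimately have "int l dvd x^2 - x + N" using pl prime_dvd_mult_iff by blast
    hence "[x^2 - x + (1 - D) div 4 = 0] (mod int l)"
      using N by (simp add: cong_0_iff flip: N)
    thus False using inert unfolding inert_def by blast
  qed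
qed

lemma inert_multiplicity_norm_form:
  assumes inert: "inert D l" and N: "4 * N = 1 - D" and nz: "\<not> (A = 0 \<and> B = 0)"
  shows "mult_at l (A^2 + A*B + N*B^2) = 2 * (if A = 0 then mult_at l B else if B = 0 then mult_at l A
           else min (mult_at l A) (mult_at l B))"
proof -
  have l: "prime l" using inert by (simp add: inert_def)
  define k where "k = (if A = 0 then mult_at l B else if B = 0 then mult_at l A
           else min (mult_at l A) (mult_at l B))"
  have "int l ^ k dvd A"
  proof (cases "A = 0")
    case False thus ?thesis unfolding k_def by (intro multiplicity_dvd') auto
  qed simp
  then obtain A1 where A1: "A = int l ^ k * A1" by blast
  have "int l ^ k dvd B"
  proof (cases "B = 0")
    case False thus ?thesis unfolding k_def by (intro multiplicity_dvd') auto
  qed simp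
  then obtain B1 where B1: "B = int l ^ k * B1" by blast
  have nd: "\<not> (int l dvd A1 \<and> int l dvd B1)"
  proof
    assume "int l dvd A1 \<and> int l dvd B1"
    hence "int l ^ Suc k dvd A" "int l ^ Suc k dvd B" using A1 B1 by (auto simp: mult_dvd_mono)
    moreover have "k = mult_at l A \<and> A \<noteq> 0 \<or> k = mult_at l B \<and> B \<noteq> 0"
      using nz unfolding k_def by (auto simp: min_def)
    ultimately show False
      using le_multiplicity_of_dvd[OF l, of A "Suc k"] le_multiplicity_of_dvd[OF l, of B "Suc k"]
      by auto
  qed
  have pk: "int l ^ (2*k) = int l ^ k * int l ^ k" by (simp add: power_add[symmetric] mult_2)
  have "A^2 + A*B + N*B^2 = int l ^ (2*k) * (A1^2 + A1*B1 + N*B1^2)"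
    unfolding A1 B1 pk by (simp add: algebra_simps power2_eq_square)
  hence "mult_at l (A^2 + A*B + N*B^2) = 2*k"
    using l by (intro multiplicity_decomposeI[OF _ inert_norm_form_not_dvd[OF inert N nd]]) simp_all
  thus ?thesis unfolding k_def .
qed

lemma inert_D_not_square_mod:
  assumes inert: "inert D l" and N: "4 * N = 1 - D" and l_odd: "odd l"
  shows "\<not> int l dvd t^2 - D"
proof
  assume h: "int l dvd t^2 - D"
  have pl: "prime (int l)" using inert by (simp add: inert_def)
  \<comment> \<open>\<open>x = (1 + t)/2\<close> modulo \<open>l\<close> would be a root of \<open>X\<^sup>2 - X + N\<close>\<close>
  define x where "x = (1 + t) * ((int l + 1) div 2)"
  have "2 * ((int l + 1) div 2) = int l + 1" using l_odd by presburger
  hence x2: "2 * x = (1 + t) * (int l + 1)" unfolding x_def by (metis mult.left_commute)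
  have "4 * (x^2 - x + N) = (2*x - 1)^2 - D" using N by (simp add: power2_eq_square algebra_simps)
  also have "(2*x - 1) = t + int l * (1 + t)" unfolding x2 by (simp add: algebra_simps)
  also have "(t + int l * (1 + t))^2 - D = (t^2 - D) + int l * ((1+t) * (2*t + int l * (1 + t)))"
    by (simp add: power2_eq_square algebra_simps)
  finally have "int l dvd 2 * (2 * (x^2 - x + N))" using h by simp
  moreover have "\<not> int l dvd 2"
  proof -
    have "l \<noteq> 2" using l_odd by auto
    hence "l \<ge> 3" using prime_ge_2_nat[of l] inert by (simp add: inert_def)
    thus ?thesis by (auto dest: zdvd_imp_le)
  qed
  ultimately have "int l dvd x^2 - x + N" using pl prime_dvd_mult_iff by metis
  hence "[x^2 - x + (1 - D) div 4 = 0] (mod int l)" by (simp add: cong_0_iff flip: N)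
  thus False using inert unfolding inert_def by blast
qed

lemma inert_two_D_mod_8:
  assumes "inert D 2" "D mod 4 = 1"
  shows "D mod 8 = 5"
proof -
  have "\<not> [0^2 - 0 + (1 - D) div 4 = 0] (mod int 2)" using assms(1) unfolding inert_def by blast
  hence "odd ((1 - D) div 4)" by (simp add: cong_0_iff)
  then obtain j where j: "(1 - D) div 4 = 2 * j + 1" by (metis oddE)
  have "1 - D = 4 * ((1 - D) div 4)" using assms(2) by presburger
  hence "D = 8 * (- j - 1) + 5" unfolding j by simp
  thus ?thesis by presburger
qed

section \<open>The valuation at an inert prime\<close>

locale inert_place = quad_field +
  fixes l :: nat
  assumes inert: "inert D l"
begin

abbreviation kord :: "complex \<Rightarrow> int" where "kord x \<equiv> ordv D l x"

definition kord_ge :: "complex \<Rightarrow> int \<Rightarrow> bool" where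
  "kord_ge x k \<longleftrightarrow> x = 0 \<or> kord x \<ge> k"

lemma l_prime: "prime l"
  using inert by (simp add: inert_def)

lemma kord_kelem: "kord (kelem a b) =
    (if a = 0 then qord l b else if b = 0 then qord l a else min (qord l a) (qord l b))"
  unfolding ordv_def by simp

lemma qord_knorm:
  assumes nz: "\<not> (a = 0 \<and> b = 0)"
  shows "qord l (knorm a b) = 2 * kord (kelem a b)"
proof -
  obtain A1 B1 where a: "a = of_int A1 / of_int B1" "B1 > 0" by (rule rat_as_int_frac)
  obtain C E where b: "b = of_int C / of_int E" "E > 0" by (rule rat_as_int_frac)
  define M where "M = B1 * E"
  define A where "A = A1 * E"
  define B where "B = C * B1"
  have M: "M > 0" unfolding M_def using a b by simp
  have aa: "a = of_int A / of_int M" unfolding A_def M_def using a b by simp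
  have bb: "b = of_int B / of_int M" unfolding B_def M_def using a b by simp
  have a0: "a = 0 \<longleftrightarrow> A = 0" using aa M by simp
  have b0: "b = 0 \<longleftrightarrow> B = 0" using bb M by simp
  have nzAB: "\<not> (A = 0 \<and> B = 0)" using nz a0 b0 by simp
  have NN: "knorm a b = of_int (A^2 + A*B + N_omega*B^2) / of_int (M^2)"
    unfolding knorm_def aa bb using M by (simp add: field_simps power2_eq_square)
  have Nnz: "A^2 + A*B + N_omega*B^2 \<noteq> 0"
  proof
    assume "A^2 + A*B + N_omega*B^2 = 0"
    hence "knorm a b = 0" using NN by simp
    thus False using knorm_pos[OF nz] by simp
  qed
  have M2: "mult_at l (M^2) = 2 * mult_at l M"
    using prime_elem_multiplicity_power_distrib[of "int l" M 2] l_prime M by simp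
  have q1: "qord l (knorm a b) = int (mult_at l (A^2 + A*B + N_omega*B^2)) - int (mult_at l (M^2))"
    unfolding NN by (rule qord_frac[OF l_prime Nnz]) (use M in simp)
  have qa: "A \<noteq> 0 \<Longrightarrow> qord l a = int (mult_at l A) - int (mult_at l M)"
    unfolding aa by (rule qord_frac[OF l_prime _ M])
  have qb: "B \<noteq> 0 \<Longrightarrow> qord l b = int (mult_at l B) - int (mult_at l M)"
    unfolding bb by (rule qord_frac[OF l_prime _ M])
  show ?thesis
    unfolding q1 inert_multiplicity_norm_form[OF inert four_N_omega nzAB] M2 kord_kelem a0 b0
    using qa qb nzAB by (auto simp: min_def)
qed

lemma kord_mult:
  assumes "x \<in> Kf D" "y \<in> Kf D" "x \<noteq> 0" "y \<noteq> 0"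
  shows "kord (x * y) = kord x + kord y"
proof -
  obtain a b where x: "x = kelem a b" using assms(1) KfE by blast
  obtain c d where y: "y = kelem c d" using assms(2) KfE by blast
  have nx: "\<not> (a = 0 \<and> b = 0)" using assms(3) x kelem_eq_0_iff by simp
  have ny: "\<not> (c = 0 \<and> d = 0)" using assms(4) y kelem_eq_0_iff by simp
  have xy: "x * y = kelem (a*c - of_int N_omega*b*d) (a*d + b*c + b*d)"
    unfolding x y kelem_mult ..
  have nxy: "\<not> (a*c - of_int N_omega*b*d = 0 \<and> a*d + b*c + b*d = 0)"
    using assms(3,4) xy kelem_eq_0_iff by (metis mult_eq_0_iff)
  have "2 * kord (x * y) = qord l (knorm a b * knorm c d)"
    unfolding xy qord_knorm[OF nxy, symmetric] knorm_mult ..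
  also have "\<dots> = qord l (knorm a b) + qord l (knorm c d)"
    using qord_mult[OF l_prime] knorm_pos[OF nx] knorm_pos[OF ny] by simp
  also have "\<dots> = 2 * kord x + 2 * kord y"
    unfolding x y qord_knorm[OF nx] qord_knorm[OF ny] ..
  finally show ?thesis by simp
qed

lemma kord_uminus: "x \<in> Kf D \<Longrightarrow> kord (- x) = kord x"
  by (auto elim!: KfE simp: kelem_uminus kord_kelem qord_uminus)

lemma kord_of_int: "n \<noteq> 0 \<Longrightarrow> kord (of_int n) = int (mult_at l n)"
  unfolding of_int_kelem kord_kelem using qord_of_int[OF l_prime] by simp

lemma kord_1 [simp]: "kord 1 = 0"
  using kord_of_int[of 1] by simp

lemma kord_of_int_unit: "\<not> int l dvd n \<Longrightarrow> n \<noteq> 0 \<and> kord (of_int n) = 0"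
  using kord_of_int[of n] not_dvd_imp_multiplicity_0[of "int l" n] by auto

lemma kord_inverse:
  assumes "x \<in> Kf D" "x \<noteq> 0"
  shows "kord (inverse x) = - kord x"
proof -
  have "kord (x * inverse x) = kord x + kord (inverse x)"
    using assms by (intro kord_mult) auto
  thus ?thesis using assms by simp
qed

lemma kord_power: "x \<in> Kf D \<Longrightarrow> x \<noteq> 0 \<Longrightarrow> kord (x ^ n) = int n * kord x"
  by (induction n) (auto simp: kord_mult algebra_simps)

lemma kord_sqrt_1:
  assumes "x \<in> Kf D" "x^2 = 1"
  shows "x \<noteq> 0 \<and> kord x = 0"
proof -
  have "x \<noteq> 0" using assms(2) by auto
  moreover have "kord (x^2) = 2 * kord x" using kord_power[OF assms(1) \<open>x \<noteq> 0\<close>, of 2] by simp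
  ultimately show ?thesis using assms(2) by simp
qed

lemma kord_ge_kelem: "kord_ge (kelem a b) k \<longleftrightarrow> qord_ge l k a \<and> qord_ge l k b"
  unfolding kord_ge_def qord_ge_def kord_kelem kelem_eq_0_iff by auto

lemma kord_ge_0 [simp]: "kord_ge 0 k"
  unfolding kord_ge_def by simp

lemma kord_ge_kord: "kord_ge x (kord x)"
  unfolding kord_ge_def by simp

lemma kord_ge_mono: "kord_ge x k \<Longrightarrow> j \<le> k \<Longrightarrow> kord_ge x j"
  unfolding kord_ge_def by auto

lemma kord_ge_add:
  assumes "x \<in> Kf D" "y \<in> Kf D" "kord_ge x k" "kord_ge y k"
  shows "kord_ge (x + y) k"
proof -
  obtain a b where x: "x = kelem a b" using assms(1) KfE by blast
  obtain c d where y: "y = kelem c d" using assms(2) KfE by blast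
  show ?thesis
    using assms(3,4) qord_ge_add[OF l_prime] unfolding x y kelem_add kord_ge_kelem by auto
qed

lemma kord_ge_uminus: "x \<in> Kf D \<Longrightarrow> kord_ge (- x) k \<longleftrightarrow> kord_ge x k"
  unfolding kord_ge_def by (simp add: kord_uminus)

lemma kord_ge_diff:
  "x \<in> Kf D \<Longrightarrow> y \<in> Kf D \<Longrightarrow> kord_ge x k \<Longrightarrow> kord_ge y k \<Longrightarrow> kord_ge (x - y) k"
  using kord_ge_add[of x "- y" k] kord_ge_uminus[of y] by simp

lemma kord_ge_mult:
  "x \<in> Kf D \<Longrightarrow> y \<in> Kf D \<Longrightarrow> kord_ge x k \<Longrightarrow> kord_ge y j \<Longrightarrow> kord_ge (x * y) (k + j)"
  using kord_mult[of x y] unfolding kord_ge_def by (cases "x = 0 \<or> y = 0") auto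

lemma kord_ge_power:
  assumes "x \<in> Kf D" "kord_ge x k"
  shows "kord_ge (x ^ n) (int n * k)"
proof (induction n)
  case (Suc n)
  have "kord_ge (x * x ^ n) (k + int n * k)" using assms Suc by (intro kord_ge_mult) auto
  thus ?case by (simp add: algebra_simps)
qed (simp add: kord_ge_def)

lemma kord_ge_of_int_dvd: "int l ^ j dvd n \<Longrightarrow> kord_ge (of_int n) (int j)"
  unfolding kord_ge_def using kord_of_int le_multiplicity_of_dvd[OF l_prime] by (cases "n = 0") auto

lemma kord_ge_of_int: "kord_ge (of_int n) 0"
  using kord_ge_of_int_dvd[of 0 n] by simp

lemma kord_ge_of_nat: "kord_ge (of_nat n) 0"
  using kord_ge_of_int[of "int n"] by simp

lemma kord_add_dominant:
  assumes "x \<in> Kf D" "y \<in> Kf D" "x \<noteq> 0" "kord_ge y (kord x + 1)"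
  shows "x + y \<noteq> 0 \<and> kord (x + y) = kord x"
proof -
  have "x + y \<noteq> 0"
  proof
    assume "x + y = 0"
    hence "x = - y" by (simp add: eq_neg_iff_add_eq_0)
    hence "kord_ge x (kord x + 1)" using assms kord_ge_uminus[of y] by simp
    thus False using assms(3) unfolding kord_ge_def by simp
  qed
  moreover have "kord_ge (x + y) (kord x)"
    using assms kord_ge_kord kord_ge_mono by (intro kord_ge_add) auto
  moreover have "\<not> kord_ge (x + y) (kord x + 1)"
  proof
    assume "kord_ge (x + y) (kord x + 1)"
    hence "kord_ge ((x + y) - y) (kord x + 1)" using assms by (intro kord_ge_diff) auto
    thus False using assms(3) unfolding kord_ge_def by simp
  qed
  ultimately show ?thesis unfolding kord_ge_def by auto
qed

lemma kord_add_distinct: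
  assumes "x \<in> Kf D" "y \<in> Kf D" "x \<noteq> 0" "y \<noteq> 0" "kord x \<noteq> kord y"
  shows "x + y \<noteq> 0 \<and> kord (x + y) = min (kord x) (kord y)"
proof (cases "kord x < kord y")
  case True
  hence "kord_ge y (kord x + 1)" unfolding kord_ge_def by simp
  thus ?thesis using kord_add_dominant[of x y] assms True by simp
next
  case False
  hence "kord_ge x (kord y + 1)" using assms(5) unfolding kord_ge_def by simp
  thus ?thesis using kord_add_dominant[of y x] assms False by (simp add: add.commute)
qed

end

locale inert_two = inert_place D 2 for D :: int
begin

lemma kord_of_int_power_2: "kord (of_int (2 ^ n)) = int n"
  using kord_of_int[of "2 ^ n"] multiplicity_prime_power[of "2::int" n] by simp

lemma kord_2: "kord 2 = 1" and kord_4: "kord 4 = 2"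
  using kord_of_int_power_2[of 1] kord_of_int_power_2[of 2] by simp_all

lemma kord_ge_2: "kord_ge 2 1" and kord_ge_4: "kord_ge 4 2" and kord_ge_8: "kord_ge 8 2"
  using kord_ge_of_int_dvd[of 1 2] kord_ge_of_int_dvd[of 2 4] kord_ge_of_int_dvd[of 2 8] by simp_all

end

section \<open>Local solvability at an inert prime\<close>

context inert_place
begin

lemma l_ge_2: "real l \<ge> 2"
  using l_prime prime_ge_2_nat by simp

lemma absv_le_of_kord_ge: "kord_ge x k \<Longrightarrow> absv D l x \<le> real l powr (- real_of_int k)"
  unfolding absv_def kord_ge_def using l_ge_2 by (auto intro: powr_mono)

lemma kord_ge_of_absv_less:
  assumes "absv D l x < real l powr (- real_of_int k)"
  shows "kord_ge x (k + 1)"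
proof (cases "x = 0")
  case False
  hence "real l powr (- real_of_int (kord x)) < real l powr (- real_of_int k)"
    using assms unfolding absv_def by simp
  hence "- real_of_int (kord x) < - real_of_int k" using l_ge_2 by (simp add: powr_less_cancel_iff)
  thus ?thesis unfolding kord_ge_def by simp
qed (simp add: kord_ge_def)

lemma l_powr_neg_tendsto_0: "(\<lambda>n. real l powr (- real n)) \<longlonglongrightarrow> 0"
proof -
  have "(\<lambda>n. inverse (real l) ^ n) \<longlonglongrightarrow> 0"
    using l_ge_2 by (intro LIMSEQ_power_zero) (auto simp: inverse_less_1_iff)
  moreover have "real l powr (- real n) = inverse (real l) ^ n" for n
    using l_ge_2 by (simp add: powr_minus powr_realpow power_inverse)
  ultimately show ?thesis by simp
qed

lemma cauchy_v_of_kord_ge: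
  assumes "\<And>m n. kord_ge (s m - s n) (int (min m n))"
  shows "cauchy_v D l s"
  unfolding cauchy_v_def
proof (intro allI impI)
  fix e :: real assume "e > 0"
  then obtain N where N: "real l powr (- real N) < e"
    using LIMSEQ_D[OF l_powr_neg_tendsto_0] by fastforce
  have "absv D l (s m - s n) < e" if "m \<ge> N" "n \<ge> N" for m n
  proof -
    have "kord_ge (s m - s n) (int N)" using assms[of m n] that kord_ge_mono by fastforce
    thus ?thesis using absv_le_of_kord_ge N by fastforce
  qed
  thus "\<exists>N. \<forall>m\<ge>N. \<forall>n\<ge>N. absv D l (s m - s n) < e" by blast
qed

lemma loc_solI:
  assumes "\<And>n. z n \<in> Kf D \<and> w n \<in> Kf D"
    and "\<And>m n. kord_ge (z m - z n) (int (min m n))"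
    and "\<And>m n. kord_ge (w m - w n) (int (min m n))"
    and res: "\<And>n. kord_ge (d * (w n)^2 - g d (z n)) (int n)"
  shows "loc_sol D l g d"
  unfolding loc_sol_def
proof (intro exI conjI)
  show "(\<lambda>n. absv D l (d * (w n)^2 - g d (z n))) \<longlonglongrightarrow> 0"
  proof (rule real_tendsto_sandwich[OF _ _ tendsto_const l_powr_neg_tendsto_0])
    show "\<forall>\<^sub>F n in sequentially. 0 \<le> absv D l (d * (w n)\<^sup>2 - g d (z n))"
      by (simp add: absv_def)
    show "\<forall>\<^sub>F n in sequentially. absv D l (d * (w n)\<^sup>2 - g d (z n)) \<le> real l powr (- real n)"
      using absv_le_of_kord_ge[OF res] by simp
  qed
qed (use assms cauchy_v_of_kord_ge in blast)+

lemma not_loc_sol_of_residual_bound: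
  assumes "\<And>z w. z \<in> Kf D \<Longrightarrow> w \<in> Kf D \<Longrightarrow>
              d * w^2 - g d z \<noteq> 0 \<and> kord (d * w^2 - g d z) \<le> N"
  shows "\<not> loc_sol D l g d"
proof
  assume "loc_sol D l g d"
  then obtain z w where K: "\<forall>n. z n \<in> Kf D \<and> w n \<in> Kf D"
    and lim: "(\<lambda>n. absv D l (d * (w n)^2 - g d (z n))) \<longlonglongrightarrow> 0"
    unfolding loc_sol_def by blast
  have "real l powr (- real_of_int N) > 0" using l_ge_2 by simp
  then obtain n where "absv D l (d * (w n)^2 - g d (z n)) < real l powr (- real_of_int N)"
    using LIMSEQ_D[OF lim] by (fastforce simp: absv_def)
  hence "kord_ge (d * (w n)^2 - g d (z n)) (N + 1)" by (rule kord_ge_of_absv_less)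
  thus False using assms[of "z n" "w n"] K unfolding kord_ge_def by fastforce
qed

lemma loc_sol_of_point:
  assumes "z \<in> Kf D" "w \<in> Kf D" "d * w^2 = g d z"
  shows "loc_sol D l g d"
  using assms by (intro loc_solI[where z = "\<lambda>_. z" and w = "\<lambda>_. w"]) auto

text \<open>A point of \<open>C_d\<close> over \<open>K(\<surd>c)\<close>, given by coordinates that are affine in \<open>\<surd>c\<close>,
  yields a \<open>K\<^sub>v\<close>-point from \<open>v\<close>-adic approximations \<open>x\<^sub>n\<close> to \<open>\<surd>c\<close>.\<close>

lemma loc_sol_of_approx_sqrt:
  assumes x: "\<And>n. x n \<in> Kf D" "\<And>n. kord_ge (x n) 0"
      "\<And>m n. kord_ge (x m - x n) (int (min m n))" "\<And>n. kord_ge ((x n)^2 - c) (int n)"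
    and c: "c \<in> Kf D"
    and K: "za \<in> Kf D" "zb \<in> Kf D" "wa \<in> Kf D" "wb \<in> Kf D" "kord_ge za 0" "kord_ge wa 0"
    and H: "\<And>u. u \<in> Kf D \<Longrightarrow> kord_ge u 0 \<Longrightarrow> H u \<in> Kf D \<and> kord_ge (H u) 0 \<and>
              d * (wa*u + wb)^2 - g d (za*u + zb) = (u^2 - c) * H u"
  shows "loc_sol D l g d"
proof (rule loc_solI[where z = "\<lambda>n. za * x n + zb" and w = "\<lambda>n. wa * x n + wb"])
  fix m n
  show "za * x n + zb \<in> Kf D \<and> wa * x n + wb \<in> Kf D" using K x by simp
  have "kord_ge (za * (x m - x n)) (0 + int (min m n))"
    using K x by (intro kord_ge_mult) auto
  thus "kord_ge (za * x m + zb - (za * x n + zb)) (int (min m n))" by (simp add: algebra_simps)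
  have "kord_ge (wa * (x m - x n)) (0 + int (min m n))"
    using K x by (intro kord_ge_mult) auto
  thus "kord_ge (wa * x m + wb - (wa * x n + wb)) (int (min m n))" by (simp add: algebra_simps)
  have "kord_ge (((x n)^2 - c) * H (x n)) (int n + 0)"
    using H[OF x(1,2)] x c by (intro kord_ge_mult) auto
  thus "kord_ge (d * (wa * x n + wb)^2 - g d (za * x n + zb)) (int n)" using H[OF x(1,2)] by simp
qed

end

section \<open>Hensel lifting of square roots\<close>

lemma coherent_seq_of_lifting:
  fixes Q :: "nat \<Rightarrow> int \<Rightarrow> bool" and b :: int
  assumes base: "Q 0 y0" and step: "\<And>n y. Q n y \<Longrightarrow> \<exists>y'. Q (Suc n) y' \<and> b^n dvd y' - y"
  shows "\<exists>f. (\<forall>n. Q n (f n)) \<and> (\<forall>m n. b^(min m n) dvd f m - f n)"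
proof -
  define f where "f = rec_nat y0 (\<lambda>n y. SOME y'. Q (Suc n) y' \<and> b^n dvd y' - y)"
  have f0: "f 0 = y0" unfolding f_def by simp
  have fS: "f (Suc n) = (SOME y'. Q (Suc n) y' \<and> b^n dvd y' - f n)" for n
    unfolding f_def by simp
  have Qf: "Q n (f n) \<and> b^n dvd f (Suc n) - f n" for n
  proof (induction n)
    case 0
    have "Q (Suc 0) (f (Suc 0)) \<and> b^0 dvd f (Suc 0) - f 0"
      unfolding fS[of 0] by (rule someI_ex) (use step[OF base[folded f0]] in simp)
    thus ?case using base f0 by simp
  next
    case (Suc n)
    have q: "Q (Suc n) (f (Suc n))"
      unfolding fS by (rule conjunct1[OF someI_ex]) (use step Suc in blast)
    have "Q (Suc (Suc n)) (f (Suc (Suc n))) \<and> b^(Suc n) dvd f (Suc (Suc n)) - f (Suc n)"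
      unfolding fS[of "Suc n"] by (rule someI_ex) (use step[OF q] in blast)
    thus ?case using q by simp
  qed
  have coh: "b^n dvd f (n + k) - f n" for n k
  proof (induction k)
    case (Suc k)
    have "b^n dvd f (Suc (n + k)) - f (n + k)"
      using Qf[of "n + k"] dvd_trans le_imp_power_dvd[of n "n + k" b] by auto
    hence "b^n dvd (f (Suc (n + k)) - f (n + k)) + (f (n + k) - f n)" using Suc by (rule dvd_add)
    thus ?case by simp
  qed simp
  have "b^(min m n) dvd f m - f n" for m n
  proof (cases "n \<le> m")
    case True
    then obtain k where "m = n + k" using le_Suc_ex by blast
    thus ?thesis using coh True by (simp add: min_def)
  next
    case False
    then obtain k where "n = m + k" using le_Suc_ex nat_le_linear by metis
    hence "b^m dvd f n - f m" using coh by simp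
    thus ?thesis using False by (simp add: min_def dvd_diff_commute)
  qed
  thus ?thesis using Qf by blast
qed

lemma hensel_odd:
  assumes l: "prime l" "odd l" and c: "\<not> int l dvd c" and y0: "int l dvd y0^2 - c"
  shows "\<exists>f. (\<forall>n. int l^n dvd (f n)^2 - c) \<and> (\<forall>m n. int l^(min m n) dvd f m - f n)"
proof -
  have pl: "prime (int l)" using l by simp
  have not_dvd_2: "\<not> int l dvd 2"
  proof -
    have "l \<noteq> 2" using l(2) by auto
    hence "l \<ge> 3" using prime_ge_2_nat[OF l(1)] by simp
    thus ?thesis by (auto dest: zdvd_imp_le)
  qed
  have "\<exists>f. (\<forall>n. int l^(n+1) dvd (f n)^2 - c) \<and> (\<forall>m n. int l^(min m n) dvd f m - f n)"
  proof (rule coherent_seq_of_lifting[where Q = "\<lambda>n y. int l^(n+1) dvd y^2 - c"])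
    show "int l^(0+1) dvd y0^2 - c" using y0 by simp
  next
    fix n y assume Q: "int l^(n+1) dvd y^2 - c"
    hence "int l dvd y^2 - c" by (metis dvd_power dvd_trans add_gr_0 zero_less_one)
    hence "\<not> int l dvd y"
      using c by (metis dvd_diff_right_iff dvd_mult2 power2_eq_square)
    hence "\<not> int l dvd 2 * y" using not_dvd_2 pl prime_dvd_mult_iff by blast
    hence "coprime (2 * y) (int l)" using pl prime_imp_coprime coprime_commute by blast
    then obtain u where "[2 * y * u = 1] (mod int l)" using cong_solve_coprime_int by blast
    hence lu: "int l dvd 1 - 2 * y * u" by (metis cong_iff_dvd_diff cong_sym)
    obtain k where k: "y^2 - c = int l^(n+1) * k" using Q by blast
    \<comment> \<open>Newton step \<open>y' = y - (y\<^sup>2 - c)/(2y)\<close>, with \<open>u\<close> inverting \<open>2y\<close> modulo \<open>l\<close>\<close>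
    define L where "L = int l^(n+1)"
    define t where "t = - k * u"
    have "(y + t*L)^2 - c = (y^2 - c) + 2*y*t*L + (t*L)^2" by (simp add: power2_eq_square algebra_simps)
    also have "\<dots> = L * k * (1 - 2*y*u) + (t*L)^2" unfolding k L_def t_def by (simp add: algebra_simps)
    also have "1 - 2*y*u = int l * ((1 - 2*y*u) div int l)" using lu by simp
    finally have eq: "(y + t*L)^2 - c = L * int l * (k * ((1 - 2*y*u) div int l)) + (t*L)^2"
      by (simp add: algebra_simps)
    have "int l^(Suc n + 1) dvd L * L"
      unfolding L_def power_add[symmetric] by (rule le_imp_power_dvd) simp
    hence "int l^(Suc n + 1) dvd (t*L)^2"
      by (metis dvd_mult2 power2_eq_square mult.commute mult.left_commute power_mult_distrib)
    moreover have "int l^(Suc n + 1) dvd L * int l * (k * ((1 - 2*y*u) div int l))"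
      unfolding L_def by simp
    ultimately have "int l^(Suc n + 1) dvd (y + t*L)^2 - c" unfolding eq by simp
    moreover have "int l^n dvd (y + t*L) - y" unfolding L_def by simp
    ultimately show "\<exists>y'. int l^(Suc n + 1) dvd y'^2 - c \<and> int l^n dvd y' - y" by blast
  qed
  thus ?thesis using dvd_trans le_imp_power_dvd[of _ "_ + 1" "int l"] by (meson le_add1)
qed

lemma hensel_two:
  assumes c: "c mod 8 = 1"
  shows "\<exists>f. (\<forall>n. (2::int)^n dvd (f n)^2 - c) \<and> (\<forall>m n. (2::int)^(min m n) dvd f m - f n)"
proof -
  have "\<exists>f. (\<forall>n. (2::int)^(n+3) dvd (f n)^2 - c \<and> odd (f n))
          \<and> (\<forall>m n. (2::int)^(min m n) dvd f m - f n)"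
  proof (rule coherent_seq_of_lifting[where Q = "\<lambda>n y. (2::int)^(n+3) dvd y^2 - c \<and> odd y"])
    show "(2::int)^(0+3) dvd 1^2 - c \<and> odd (1::int)" using c by (simp add: mod_eq_dvd_iff[symmetric])
  next
    fix n and y :: int assume Q: "2^(n+3) dvd y^2 - c \<and> odd y"
    obtain k where k: "y^2 - c = 2^(n+3) * k" using Q by blast
    show "\<exists>y'. ((2::int)^(Suc n + 3) dvd y'^2 - c \<and> odd y') \<and> 2^n dvd y' - y"
    proof (cases "even k")
      case True
      then obtain j where "k = 2*j" by blast
      hence "y^2 - c = 2^(Suc n + 3) * j" using k by (simp add: power_add)
      thus ?thesis using Q by (intro exI[of _ y]) auto
    next
      case False
      \<comment> \<open>\<open>(y + 2\<^sup>n\<^sup>+\<^sup>2)\<^sup>2 - c = 2\<^sup>n\<^sup>+\<^sup>3 (k + y) + 2\<^sup>2\<^sup>n\<^sup>+\<^sup>4\<close> and \<open>k + y\<close> is even\<close>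
      define y' where "y' = y + 2^(n+2)"
      have eq: "y'^2 - c = 2^(n+3) * (k + y) + 2^(n+4) * 2^n"
        unfolding y'_def using k by (simp add: power2_eq_square algebra_simps power_add)
      have "even (k + y)" using False Q by simp
      then obtain j where "k + y = 2*j" by blast
      hence "y'^2 - c = 2^(Suc n + 3) * (j + 2^n)" unfolding eq by (simp add: algebra_simps power_add)
      moreover have "odd y'" unfolding y'_def using Q by simp
      moreover have "(2::int)^n dvd y' - y" unfolding y'_def by (simp add: le_imp_power_dvd)
      ultimately show ?thesis by (intro exI[of _ y']) auto
    qed
  qed
  thus ?thesis using dvd_trans le_imp_power_dvd[of _ "_ + 3" "2::int"] by (meson le_add1)
qed

lemma square_mod_or_times_nonsquare:
  assumes l: "prime l" "odd l" and c: "\<not> int l dvd c" and D: "\<And>t. \<not> int l dvd t^2 - D"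
  shows "(\<exists>y. int l dvd y^2 - c) \<or> (\<exists>y. int l dvd y^2 - c * D)"
proof (rule ccontr)
  assume nn: "\<not> ((\<exists>y. int l dvd y^2 - c) \<or> (\<exists>y. int l dvd y^2 - c * D))"
  have l2: "2 < l" using l prime_ge_2_nat[of l] by (cases "l = 2") auto
  have pl: "prime (int l)" using l by simp
  have qr: "QuadRes (int l) a \<longleftrightarrow> (\<exists>y. int l dvd y^2 - a)" for a
    unfolding QuadRes_def by (simp add: cong_iff_dvd_diff)
  have nonres: "Legendre a (int l) = -1" if "\<not> int l dvd a" "\<not> (\<exists>y. int l dvd y^2 - a)" for a
    using that qr[of a] unfolding Legendre_def by (auto simp: cong_0_iff)
  have euler: "[-1 = a ^ ((l - 1) div 2)] (mod int l)"
    if "\<not> int l dvd a" "\<not> (\<exists>y. int l dvd y^2 - a)" for a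
    using euler_criterion[OF l(1) l2, of a] nonres[OF that] by simp
  have "\<not> int l dvd D" using D[of 0] by simp
  hence "\<not> int l dvd c * D" using c pl prime_dvd_mult_iff by blast
  have "[(-1) * (-1) = c ^ ((l - 1) div 2) * D ^ ((l - 1) div 2)] (mod int l)"
    using euler[OF c] euler[OF \<open>\<not> int l dvd D\<close>] nn D by (intro cong_mult) auto
  hence "[1 = (c * D) ^ ((l - 1) div 2)] (mod int l)" by (simp add: power_mult_distrib)
  hence "[-1 = 1] (mod int l)"
    using euler[OF \<open>\<not> int l dvd c * D\<close>] nn cong_sym cong_trans by blast
  hence "int l dvd 2" by (simp add: cong_iff_dvd_diff)
  thus False using l2 by (auto dest: zdvd_imp_le)
qed

context inert_place
begin

lemma D_mod_8_of_l_2: "l = 2 \<Longrightarrow> D mod 8 = 5"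
  using inert inert_two_D_mod_8 D_mod_4 by simp

lemma not_dvd_D: "\<not> int l dvd D"
proof (cases "odd l")
  case True thus ?thesis using inert_D_not_square_mod[OF inert four_N_omega True, of 0] by simp
next
  case False
  hence "l = 2" using l_prime prime_odd_nat[of l] prime_ge_2_nat[of l] by fastforce
  thus ?thesis using D_mod_4 by presburger
qed

text \<open>Either \<open>c\<close> or \<open>c D\<close> has a square root in \<open>\<int>\<^sub>l\<close>; since \<open>D\<close> is a square in \<open>K\<close>, so is \<open>c\<close>.\<close>

lemma int_approx_sqrt:
  assumes c: "(odd l \<and> \<not> int l dvd c) \<or> (l = 2 \<and> c mod 4 = 1)"
  obtains c' f where "c' = c \<or> c' = c * D" "\<And>n. int l^n dvd (f n)^2 - c'"
    "\<And>m n. int l^(min m n) dvd f m - f n"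
proof (cases "odd l")
  case True
  hence cl: "\<not> int l dvd c" using c by auto
  have "(\<exists>y. int l dvd y^2 - c) \<or> (\<exists>y. int l dvd y^2 - c * D)"
    using square_mod_or_times_nonsquare[OF l_prime True cl]
      inert_D_not_square_mod[OF inert four_N_omega True] by blast
  then obtain c' y where cc: "c' = c \<or> c' = c * D" and y: "int l dvd y^2 - c'" by blast
  have "\<not> int l dvd c'" using cc cl not_dvd_D l_prime prime_dvd_mult_iff[of "int l" c D] by auto
  from hensel_odd[OF l_prime True this y] show ?thesis using that cc by blast
next
  case False
  hence l2: "l = 2" and c4: "c mod 4 = 1" using c by auto
  have D8: "D mod 8 = 5" using D_mod_8_of_l_2[OF l2] .
  define c' where "c' = (if c mod 8 = 1 then c else c * D)"
  have "c mod 8 = 1 \<or> c mod 8 = 5" using c4 by presburger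
  moreover have "(c * D) mod 8 = ((c mod 8) * (D mod 8)) mod 8" by (simp add: mod_mult_eq)
  ultimately have "c' mod 8 = 1" unfolding c'_def using D8 by auto
  from hensel_two[OF this] obtain f where
    "\<forall>n. (2::int)^n dvd (f n)^2 - c'" "\<forall>m n. (2::int)^(min m n) dvd f m - f n" by blast
  thus ?thesis using that[of c' f] l2 unfolding c'_def by auto
qed

lemma approx_sqrt_seq:
  assumes c: "(odd l \<and> \<not> int l dvd c) \<or> (l = 2 \<and> c mod 4 = 1)"
  obtains x where "\<And>n. x n \<in> Kf D" "\<And>n. kord_ge (x n) 0"
    "\<And>m n. kord_ge (x m - x n) (int (min m n))" "\<And>n. kord_ge ((x n)^2 - of_int c) (int n)"
proof -
  obtain c' f where cc: "c' = c \<or> c' = c * D" and f: "\<And>n. int l^n dvd (f n)^2 - c'"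
    and coh: "\<And>m n. int l^(min m n) dvd f m - f n"
    using int_approx_sqrt[OF c] by blast
  define g where "g = (if c' = c then 1 else inverse sqrtD)"
  have D0: "D \<noteq> 0" using D_neg by simp
  have sqrtD0: "sqrtD \<noteq> 0" using sqrtD_sq D0 by auto
  have "kord (of_int D) = 0" using kord_of_int_unit[OF not_dvd_D] by simp
  hence "kord sqrtD = 0" using kord_power[of sqrtD 2] sqrtD_sq sqrtD0 by simp
  hence g: "g \<in> Kf D" "kord_ge g 0" "g \<noteq> 0" "kord g = 0"
    unfolding g_def kord_ge_def using kord_inverse[of sqrtD] sqrtD0 by auto
  have g2: "of_int c' * g^2 = (of_int c :: complex)"
    using cc sqrtD_sq sqrtD0 D0 unfolding g_def by (auto simp: field_simps power2_eq_square)
  show ?thesis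
  proof (rule that[of "\<lambda>n. of_int (f n) * g"])
    fix m n
    show "of_int (f n) * g \<in> Kf D" using g by simp
    show "kord_ge (of_int (f n) * g) 0" using kord_ge_mult[OF _ _ kord_ge_of_int g(2)] g by simp
    have "kord_ge (of_int (f m - f n) * g) (int (min m n) + 0)"
      using kord_ge_of_int_dvd[OF coh] g by (intro kord_ge_mult) auto
    thus "kord_ge (of_int (f m) * g - of_int (f n) * g) (int (min m n))"
      by (simp add: algebra_simps)
    have "kord_ge (of_int ((f n)^2 - c') * g^2) (int n + int 2 * 0)"
      using kord_ge_of_int_dvd[OF f] kord_ge_power[OF g(1,2)] g by (intro kord_ge_mult) auto
    moreover have "of_int ((f n)^2 - c') * g^2 = (of_int (f n) * g)^2 - of_int c"
      using g2 by (simp add: algebra_simps power_mult_distrib)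
    ultimately show "kord_ge ((of_int (f n) * g)^2 - of_int c) (int n)" by simp
  qed
qed

lemma loc_sol_of_sqrt_param:
  assumes c: "(odd l \<and> \<not> int l dvd c) \<or> (l = 2 \<and> c mod 4 = 1)"
    and K: "za \<in> Kf D" "zb \<in> Kf D" "wa \<in> Kf D" "wb \<in> Kf D" "kord_ge za 0" "kord_ge wa 0"
    and H: "\<And>u. u \<in> Kf D \<Longrightarrow> kord_ge u 0 \<Longrightarrow> H u \<in> Kf D \<and> kord_ge (H u) 0 \<and>
              d * (wa*u + wb)^2 - g d (za*u + zb) = (u^2 - of_int c) * H u"
  shows "loc_sol D l g d"
proof -
  obtain x where x: "\<And>n. x n \<in> Kf D" "\<And>n. kord_ge (x n) 0"
    "\<And>m n. kord_ge (x m - x n) (int (min m n))" "\<And>n. kord_ge ((x n)^2 - of_int c) (int n)"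
    using approx_sqrt_seq[OF c] by blast
  show ?thesis
    by (rule loc_sol_of_approx_sqrt[where x = x and c = "of_int c" and H = H and g = g and d = d,
          OF x _ K H]) simp
qed

end

section \<open>Local points\<close>

context inert_place
begin

text \<open>Every \<open>l\<close>-adic unit is a square in the unramified quadratic extension \<open>K\<^sub>v\<close>.\<close>

lemma loc_sol_of_odd_unit:
  assumes "odd l" "\<not> int l dvd d" and g: "g (of_int d) 0 = (of_int d)^2"
  shows "loc_sol D l g (of_int d)"
proof (rule loc_sol_of_sqrt_param[where c = d and za = 0 and zb = 0 and wa = 1 and wb = 0
      and H = "\<lambda>_. of_int d"])
  fix u assume "u \<in> Kf D" "kord_ge u 0"
  show "of_int d \<in> Kf D \<and> kord_ge (of_int d) 0 \<and>
      of_int d * (1 * u + 0)^2 - g (of_int d) (0 * u + 0) = (u^2 - of_int d) * of_int d"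
    using kord_ge_of_int[of d] g by (simp add: algebra_simps power2_eq_square)
qed (use assms kord_ge_of_int[of 1] in simp_all)

lemma loc_sol_prime_point:
  assumes "odd l" "\<not> int l dvd eps" "eps^2 = 1"
    and g: "\<And>z. g (of_nat l) z = (of_nat l)^2 + of_int eps * (of_nat l + of_nat Q) * of_nat l * z^2
      + of_nat l * of_nat Q * z^4"
  shows "loc_sol D l g (of_nat l)"
  \<comment> \<open>the point \<open>(z, w) = (\<surd>(-\<epsilon>), 0)\<close>\<close>
proof (rule loc_sol_of_sqrt_param[where c = "- eps" and za = 1 and zb = 0 and wa = 0 and wb = 0
      and H = "\<lambda>u. - of_nat l * (of_nat Q * u^2 + of_int eps * of_nat l)"])
  fix u assume u: "u \<in> Kf D" "kord_ge u 0"
  have "kord_ge (of_nat Q * u^2) (0 + int 2 * 0)"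
    using kord_ge_of_nat kord_ge_power[OF u, of 2] u by (intro kord_ge_mult) auto
  hence "kord_ge (- of_nat l * (of_nat Q * u^2 + of_int eps * of_nat l)) (0 + 0)"
    using kord_ge_of_int[of "- int l"] kord_ge_of_int[of "eps * int l"] u
    by (intro kord_ge_mult kord_ge_add) auto
  moreover have "(of_int eps :: complex)^2 = 1" using assms(3) by (metis of_int_eq_1_iff of_int_power)
  ultimately show "- of_nat l * (of_nat Q * u^2 + of_int eps * of_nat l) \<in> Kf D \<and>
      kord_ge (- of_nat l * (of_nat Q * u^2 + of_int eps * of_nat l)) 0 \<and>
      of_nat l * (0 * u + 0)^2 - g (of_nat l) (1 * u + 0)
      = (u^2 - of_int (- eps)) * (- of_nat l * (of_nat Q * u^2 + of_int eps * of_nat l))"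
    using u unfolding g by (simp add: algebra_simps power2_eq_square power4_eq_xxxx)
qed (use assms kord_ge_of_int[of 0] kord_ge_of_int[of 1] in simp_all)

end

context inert_two
begin

lemma loc_sol_two_prime:
  assumes "odd P" "odd Q" "(int P * int Q) mod 4 = 3" "eps \<in> {1, -1}"
    and g: "\<And>z. g (of_nat P) z = (of_nat P)^2 + of_int eps * (of_nat P + of_nat Q) * of_nat P * z^2
      + of_nat P * of_nat Q * z^4"
  shows "loc_sol D 2 g (of_nat P)"
proof (cases "eps = 1")
  case True
  \<comment> \<open>a point with \<open>z = \<surd>(- P Q) / Q\<close> and \<open>w = 0\<close>\<close>
  have Q0: "(of_nat Q :: complex) \<noteq> 0" using assms(2) by (intro notI) simp
  have mod4: "(- (int P * int Q)) mod 4 = 1" using assms(3) by presburger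
  have "\<not> int 2 dvd int Q" using assms(2) by simp
  hence iQ: "kord_ge (inverse (of_nat Q)) 0"
    using kord_inverse[of "of_nat Q"] kord_of_int_unit[of "int Q"] Q0 unfolding kord_ge_def by simp
  show ?thesis
  proof (rule loc_sol_of_sqrt_param[where c = "- (int P * int Q)" and za = "inverse (of_nat Q)" and zb = 0
        and wa = 0 and wb = 0 and H = "\<lambda>u. - of_nat P * inverse (of_nat Q) * ((inverse (of_nat Q) * u)^2 + 1)"])
    fix u assume u: "u \<in> Kf D" "kord_ge u 0"
    have "kord_ge ((inverse (of_nat Q) * u)^2) (int 2 * (0 + 0))"
      using iQ u by (intro kord_ge_power kord_ge_mult) auto
    hence "kord_ge (- of_nat P * inverse (of_nat Q) * ((inverse (of_nat Q) * u)^2 + 1)) ((0 + 0) + 0)"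
      using kord_ge_of_int[of "- int P"] kord_ge_of_int[of 1] iQ u
      by (intro kord_ge_mult kord_ge_add) auto
    moreover have "of_nat P * (0 * u + 0)^2 - g (of_nat P) (inverse (of_nat Q) * u + 0)
        = (u^2 - of_int (- (int P * int Q))) * (- of_nat P * inverse (of_nat Q) * ((inverse (of_nat Q) * u)^2 + 1))"
      unfolding g True using Q0 by (simp add: field_simps power2_eq_square power4_eq_xxxx)
    ultimately show "- of_nat P * inverse (of_nat Q) * ((inverse (of_nat Q) * u)^2 + 1) \<in> Kf D \<and>
        kord_ge (- of_nat P * inverse (of_nat Q) * ((inverse (of_nat Q) * u)^2 + 1)) 0 \<and>
        of_nat P * (0 * u + 0)^2 - g (of_nat P) (inverse (of_nat Q) * u + 0)
        = (u^2 - of_int (- (int P * int Q))) * (- of_nat P * inverse (of_nat Q) * ((inverse (of_nat Q) * u)^2 + 1))"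
      using u by simp
  qed (use mod4 iQ kord_ge_of_int[of 0] in simp_all)
next
  case False
  hence "eps = -1" using assms(4) by simp
  thus ?thesis by (intro loc_sol_of_point[where z = 1 and w = 0]) (simp_all add: g algebra_simps power2_eq_square)
qed

end

section \<open>Obstructions to local solvability\<close>

context inert_place
begin

lemma quartic_residual_bound_odd_kord:
  assumes d: "d \<in> Kf D" "d \<noteq> 0" "odd (kord d)" and c: "c \<in> Kf D" "kord_ge c 0"
    and e: "e \<in> Kf D" "e \<noteq> 0" "kord e = 0" and z: "z \<in> Kf D" and w: "w \<in> Kf D"
  shows "d*w^2 - (d^2 + c*d*z^2 + e*z^4) \<noteq> 0 \<and> kord (d*w^2 - (d^2 + c*d*z^2 + e*z^4)) \<le> 2 * kord d"
proof -
  define G where "G = d^2 + c*d*z^2 + e*z^4"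
  have KG: "G \<in> Kf D" unfolding G_def using d c e z by simp
  have o2: "kord (d^2) = 2 * kord d" using kord_power[OF d(1,2), of 2] by simp
  \<comment> \<open>\<open>d\<^sup>2\<close> and \<open>e z\<^sup>4\<close> have distinct valuations, as \<open>kord d\<close> is odd, and the middle term has larger valuation\<close>
  have G: "G \<noteq> 0 \<and> even (kord G) \<and> kord G \<le> 2 * kord d"
  proof (cases "z = 0")
    case True thus ?thesis using o2 d unfolding G_def by simp
  next
    case False
    have o4: "kord (e * z^4) = 4 * kord z"
      using kord_mult[of e "z^4"] kord_power[OF z False, of 4] e z False by simp
    have ne: "2 * kord d \<noteq> 4 * kord z" using d(3) by presburger
    have S: "d^2 + e*z^4 \<noteq> 0 \<and> kord (d^2 + e*z^4) = min (2 * kord d) (4 * kord z)"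
      using kord_add_distinct[of "d^2" "e*z^4"] o2 o4 ne d e z False by simp
    have "kord_ge (c*d*z^2) (0 + kord d + int 2 * kord z)"
      using c d z by (intro kord_ge_mult kord_ge_power kord_ge_kord) auto
    moreover have "min (2 * kord d) (4 * kord z) + 1 \<le> 0 + kord d + int 2 * kord z" using ne by linarith
    ultimately have "kord_ge (c*d*z^2) (kord (d^2 + e*z^4) + 1)" using S kord_ge_mono by simp
    moreover have "G = (d^2 + e*z^4) + c*d*z^2" unfolding G_def by simp
    ultimately have "G \<noteq> 0 \<and> kord G = kord (d^2 + e*z^4)"
      using kord_add_dominant[of "d^2 + e*z^4" "c*d*z^2"] S d c e z by simp
    thus ?thesis using S by (auto simp: min_def)
  qed
  show ?thesis
  proof (cases "w = 0")
    case True thus ?thesis using G kord_uminus[OF KG] unfolding G_def[symmetric] by simp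
  next
    case False
    have "kord (d*w^2) = kord d + 2 * kord w"
      using kord_mult[of d "w^2"] kord_power[OF w False, of 2] d w False by simp
    hence "kord (d*w^2) \<noteq> kord (- G)" using G kord_uminus[OF KG] d(3) by auto presburger
    hence "d*w^2 + - G \<noteq> 0 \<and> kord (d*w^2 + - G) = min (kord (d*w^2)) (kord (- G))"
      using kord_add_distinct[of "d*w^2" "- G"] d w G False KG by simp
    thus ?thesis using G kord_uminus[OF KG] unfolding G_def[symmetric] by (simp add: min_le_iff_disj)
  qed
qed

lemma not_loc_sol_odd_kord:
  assumes "d \<in> Kf D" "d \<noteq> 0" "odd (kord d)" "c \<in> Kf D" "kord_ge c 0"
    and "e \<in> Kf D" "e \<noteq> 0" "kord e = 0"
    and g: "\<And>z. g d z = d^2 + c*d*z^2 + e*z^4"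
  shows "\<not> loc_sol D l g d"
proof (rule not_loc_sol_of_residual_bound[where N = "2 * kord d"])
  fix z w assume "z \<in> Kf D" "w \<in> Kf D"
  from quartic_residual_bound_odd_kord[OF assms(1-8) this]
  show "d * w^2 - g d z \<noteq> 0 \<and> kord (d * w^2 - g d z) \<le> 2 * kord d" unfolding g .
qed

end

context inert_two
begin

text \<open>\<open>-1\<close> is not a square modulo \<open>4\<close>.\<close>

lemma kord_sq_plus_one_le_1:
  assumes V: "V \<in> Kf D" and E: "E \<in> Kf D" "kord_ge E 2"
  shows "V^2 + 1 + E \<noteq> 0 \<and> kord (V^2 + 1 + E) \<le> 1"
proof -
  have "\<not> kord_ge (V^2 + 1 + E) 2"
  proof
    assume "kord_ge (V^2 + 1 + E) 2"
    hence V1: "kord_ge (V^2 + 1) 2" using kord_ge_diff[of "V^2 + 1 + E" E 2] V E by simp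
    show False
    proof (cases "V \<noteq> 0 \<and> kord V = 0")
      case True
      \<comment> \<open>then \<open>(V + 1)\<^sup>2 = 2V + (V\<^sup>2 + 1)\<close> would have valuation \<open>1\<close>\<close>
      have o2V: "kord (2 * V) = 1" using kord_mult[of 2 V] V True kord_2 by simp
      hence "2 * V + (V^2 + 1) \<noteq> 0 \<and> kord (2 * V + (V^2 + 1)) = 1"
        using kord_add_dominant[of "2 * V" "V^2 + 1"] V True V1 by simp
      moreover have "2 * V + (V^2 + 1) = (V + 1)^2" by (simp add: power2_eq_square algebra_simps)
      ultimately have "V + 1 \<noteq> 0" "kord ((V + 1)^2) = 1" by auto
      thus False using kord_power[of "V + 1" 2] V by simp presburger
    next
      case False
      have "V^2 + 1 \<noteq> 0 \<and> kord (V^2 + 1) \<le> 0"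
      proof (cases "V = 0")
        case False
        hence "kord (V^2) \<noteq> kord 1" using kord_power[OF V False, of 2] \<open>\<not> (V \<noteq> 0 \<and> kord V = 0)\<close> by simp
        thus ?thesis using kord_add_distinct[of "V^2" 1] V False by simp
      qed simp
      thus False using V1 unfolding kord_ge_def by simp
    qed
  qed
  thus ?thesis unfolding kord_ge_def by auto
qed

lemma kord_sq_plus_quartic_le_1:
  assumes W: "W \<in> Kf D" and Z: "Z \<in> Kf D"
  shows "W^2 + 1 - of_int (4*k) * Z^2 + 4 * Z^4 \<noteq> 0 \<and> kord (W^2 + 1 - of_int (4*k) * Z^2 + 4 * Z^4) \<le> 1"
proof (cases "kord_ge Z 0")
  case True
  define E where "E = - of_int (4*k) * Z^2 + 4 * Z^4"
  have "kord_ge (- of_int (4*k) * Z^2) (2 + int 2 * 0)"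
    using kord_ge_of_int_dvd[of 2 "4*k"] kord_ge_power[OF Z True, of 2] Z
    by (intro kord_ge_mult) (auto simp: kord_ge_uminus)
  moreover have "kord_ge (4 * Z^4) (2 + int 4 * 0)"
    using kord_ge_4 kord_ge_power[OF Z True, of 4] Z by (intro kord_ge_mult) auto
  ultimately have "kord_ge E 2" unfolding E_def using Z by (intro kord_ge_add) auto
  from kord_sq_plus_one_le_1[OF W _ this] show ?thesis unfolding E_def using Z by (simp add: algebra_simps)
next
  case False
  hence Z0: "Z \<noteq> 0" and oZ: "kord Z < 0" unfolding kord_ge_def by auto
  \<comment> \<open>rescale by \<open>Y = 2 Z\<^sup>2\<close>, whose valuation is odd and negative\<close>
  define Y where "Y = 2 * Z^2"
  have KY: "Y \<in> Kf D" and Y0: "Y \<noteq> 0" unfolding Y_def using Z Z0 by simp_all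
  have oY: "kord Y = 1 + 2 * kord Z"
    unfolding Y_def using kord_mult[of 2 "Z^2"] kord_2 kord_power[OF Z Z0, of 2] Z Z0 by simp
  define V where "V = W / Y"
  define E where "E = - of_int (2*k) * inverse Y + (inverse Y)^2"
  have KV: "V \<in> Kf D" and KE: "E \<in> Kf D" unfolding V_def E_def using W KY by simp_all
  have viY: "kord_ge (inverse Y) 1" using kord_inverse[OF KY Y0] oY oZ unfolding kord_ge_def by simp
  have "kord_ge (- of_int (2*k) * inverse Y) (1 + 1)"
    using kord_ge_of_int_dvd[of 1 "2*k"] viY KY by (intro kord_ge_mult) (auto simp: kord_ge_uminus)
  moreover have "kord_ge ((inverse Y)^2) (int 2 * 1)" using viY KY by (intro kord_ge_power) auto
  ultimately have "kord_ge E 2" unfolding E_def using KY by (intro kord_ge_add) auto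
  hence L: "V^2 + 1 + E \<noteq> 0 \<and> kord (V^2 + 1 + E) \<le> 1" by (rule kord_sq_plus_one_le_1[OF KV KE])
  have eq: "W^2 + 1 - of_int (4*k) * Z^2 + 4 * Z^4 = Y^2 * (V^2 + 1 + E)"
    unfolding V_def E_def Y_def using Z0 by (simp add: field_simps power2_eq_square power4_eq_xxxx)
  have "kord (Y^2 * (V^2 + 1 + E)) = 2 * kord Y + kord (V^2 + 1 + E)"
    using kord_mult[of "Y^2"] kord_power[OF KY Y0, of 2] KY Y0 KV KE L by simp
  thus ?thesis unfolding eq using L Y0 oY oZ by simp
qed

lemma not_loc_sol_neg_square:
  assumes t: "t \<in> Kf D" "t \<noteq> 0"
    and g: "\<And>z. g (- (t^2)) z = (- (t^2))^2 + of_int (4*k) * (- (t^2)) * z^2 + 4 * z^4"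
  shows "\<not> loc_sol D 2 g (- (t^2))"
proof (rule not_loc_sol_of_residual_bound[where N = "4 * kord t + 1"])
  fix z w assume z: "z \<in> Kf D" and w: "w \<in> Kf D"
  define I where "I = (w/t)^2 + 1 - of_int (4*k) * (z/t)^2 + 4 * (z/t)^4"
  have KI: "I \<in> Kf D" unfolding I_def using t z w by simp
  have I: "I \<noteq> 0 \<and> kord I \<le> 1"
    unfolding I_def using t z w by (intro kord_sq_plus_quartic_le_1) simp_all
  have eq: "(- (t^2)) * w^2 - g (- (t^2)) z = - (t^4 * I)"
    unfolding g I_def using t by (simp add: field_simps power2_eq_square power4_eq_xxxx)
  have "kord (t^4 * I) = 4 * kord t + kord I"
    using kord_mult[of "t^4" I] kord_power[OF t, of 4] KI I t by simp
  thus "- (t^2) * w^2 - g (- (t^2)) z \<noteq> 0 \<and> kord (- (t^2) * w^2 - g (- (t^2)) z) \<le> 4 * kord t + 1"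
    unfolding eq using I t KI kord_uminus[of "t^4 * I"] by simp
qed

text \<open>The residue field at \<open>2\<close> has four elements, so a unit \<open>z \<not>\<equiv> 1\<close> has
  \<open>z\<^sup>4 \<equiv> z \<not>\<equiv> 1\<close>.\<close>

lemma kord_fourth_power_minus_1:
  assumes z: "z \<in> Kf D" "z \<noteq> 0" "kord z = 0" and not1: "\<not> kord_ge (z - 1) 1"
  shows "z^4 - 1 \<noteq> 0 \<and> kord (z^4 - 1) = 0"
proof -
  have "kord_ge (z - 1) 0" using z by (intro kord_ge_diff) (auto simp: kord_ge_def)
  hence zm: "z - 1 \<noteq> 0" "kord (z - 1) = 0" using not1 unfolding kord_ge_def by auto
  have "(z - 1) + 2 \<noteq> 0 \<and> kord ((z - 1) + 2) = kord (z - 1)"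
    using zm z kord_ge_2 by (intro kord_add_dominant) auto
  hence zp: "z + 1 \<noteq> 0" "kord (z + 1) = 0" using zm by (simp_all add: algebra_simps)
  have "kord_ge (2 * z) (1 + 0)"
    using z by (intro kord_ge_mult[OF _ _ kord_ge_2]) (auto simp: kord_ge_def)
  hence "kord_ge (- (2 * z)) (1 + 0)" using z by (simp add: kord_ge_uminus)
  hence "kord_ge (- (2 * z)) (kord ((z + 1)^2) + 1)" using kord_power[of "z + 1" 2] zp z by simp
  hence "(z + 1)^2 + - (2 * z) \<noteq> 0 \<and> kord ((z + 1)^2 + - (2 * z)) = kord ((z + 1)^2)"
    using z zp by (intro kord_add_dominant) auto
  hence zq: "z^2 + 1 \<noteq> 0" "kord (z^2 + 1) = 0"
    using kord_power[of "z + 1" 2] zp z by (simp_all add: algebra_simps power2_eq_square)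
  have f: "z^4 - 1 = (z - 1) * (z + 1) * (z^2 + 1)"
    by (simp add: algebra_simps power2_eq_square power4_eq_xxxx)
  show ?thesis unfolding f using zm zp zq z by (simp add: kord_mult)
qed

lemma quartic_even_kord_or_near_1:
  assumes C: "C \<in> Kf D" "kord_ge C 1" and z: "z \<in> Kf D"
  defines "X \<equiv> z^4 - 2*C*z^2 + 1"
  shows "(X \<noteq> 0 \<and> even (kord X) \<and> kord X \<le> 0) \<or> kord_ge (z - 1) 1"
proof -
  have C2: "kord_ge (2*C) 2" using kord_ge_mult[OF _ C(1) kord_ge_2 C(2)] C by simp
  have Cz: "kord_ge (2*C*z^2) (2 + int 2 * kord z)"
    using z C by (intro kord_ge_mult[OF _ _ C2] kord_ge_power kord_ge_kord) simp_all
  consider "kord_ge z 1" | "z \<noteq> 0" "kord z < 0" | "z \<noteq> 0" "kord z = 0"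
    unfolding kord_ge_def by fastforce
  thus ?thesis
  proof cases
    case 1
    have "kord_ge (z^4) (int 4 * 1)" by (rule kord_ge_power[OF z 1])
    moreover have "kord_ge (2*C*z^2) (2 + int 2 * 1)"
      using kord_ge_mult[OF _ _ C2 kord_ge_power[OF z 1, of 2]] z C by simp
    ultimately have "kord_ge (z^4 - 2*C*z^2) (kord 1 + 1)"
      using z C by (intro kord_ge_diff) (auto elim: kord_ge_mono)
    hence "1 + (z^4 - 2*C*z^2) \<noteq> 0 \<and> kord (1 + (z^4 - 2*C*z^2)) = kord 1"
      using z C by (intro kord_add_dominant) auto
    thus ?thesis unfolding X_def by (simp add: algebra_simps)
  next
    case 2
    have o4: "kord (z^4) = 4 * kord z" using kord_power[OF z(1) 2(1)] by simp
    have "kord_ge 1 (4 * kord z + 1)" using 2 unfolding kord_ge_def by simp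
    moreover have "kord_ge (2*C*z^2) (4 * kord z + 1)" using Cz 2 kord_ge_mono by simp
    ultimately have "kord_ge (1 - 2*C*z^2) (kord (z^4) + 1)" unfolding o4 using z C by (intro kord_ge_diff) auto
    hence "z^4 + (1 - 2*C*z^2) \<noteq> 0 \<and> kord (z^4 + (1 - 2*C*z^2)) = kord (z^4)"
      using z 2 C by (intro kord_add_dominant) auto
    thus ?thesis using 2 unfolding X_def o4 by (simp add: algebra_simps)
  next
    case 3
    show ?thesis
    proof (rule disjCI)
      assume "\<not> kord_ge (z - 1) 1"
      from kord_fourth_power_minus_1[OF z 3 this]
      have z4: "z^4 - 1 \<noteq> 0" "kord (z^4 - 1) = 0" by auto
      have "kord_ge (2 - 2*C*z^2) (kord (z^4 - 1) + 1)"
        using z C kord_ge_2 Cz 3 z4 by (intro kord_ge_diff) (auto elim: kord_ge_mono)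
      hence "(z^4 - 1) + (2 - 2*C*z^2) \<noteq> 0 \<and> kord ((z^4 - 1) + (2 - 2*C*z^2)) = kord (z^4 - 1)"
        using z C z4 by (intro kord_add_dominant) auto
      thus "X \<noteq> 0 \<and> even (kord X) \<and> kord X \<le> 0" unfolding X_def z4 by (simp add: algebra_simps)
    qed
  qed
qed

lemma quartic_near_1_eq:
  fixes y C :: complex
  shows "(1 + 2*y)^4 - 2*C*(1 + 2*y)^2 + 1 = 2 * ((1 - C) * (1 + 4*(y + y^2)) + 8 * (y + y^2)^2)"
  by (simp add: eval_nat_numeral ring_distribs algebra_simps)

lemma residual_bound_near_1:
  assumes SG: "SG \<in> Kf D" "SG^2 = 1" and C: "C \<in> Kf D" "kord_ge C 1"
    and a: "kord_ge (SG * (1 - C) + 1) 2" and z: "z \<in> Kf D" "kord_ge (z - 1) 1" and w: "w \<in> Kf D"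
  shows "SG * w^2 - 2 * (z^4 - 2*C*z^2 + 1) \<noteq> 0 \<and> kord (SG * w^2 - 2 * (z^4 - 2*C*z^2 + 1)) \<le> 3"
proof -
  have SG0: "SG \<noteq> 0" and oSG: "kord SG = 0" using kord_sqrt_1[OF SG] by simp_all
  define y where "y = (z - 1) / 2"
  have Ky: "y \<in> Kf D" unfolding y_def using z by simp
  have "kord_ge ((z - 1) * inverse 2) (1 + -1)"
    using z kord_inverse[of 2] kord_2 by (intro kord_ge_mult) (auto simp: kord_ge_def)
  hence vy: "kord_ge y 0" unfolding y_def divide_inverse by simp
  define s where "s = y + y^2"
  have Ks: "s \<in> Kf D" and vs: "kord_ge s 0"
    unfolding s_def using Ky vy kord_ge_power[OF Ky vy, of 2] by (auto intro: kord_ge_add)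
  define T where "T = (1 - C) * (1 + 4*s) + 8 * s^2"
  have "kord_ge (- C) (kord 1 + 1)" using C by (simp add: kord_ge_uminus)
  hence a0: "1 - C \<noteq> 0" "kord (1 - C) = 0" using C kord_add_dominant[of 1 "- C"] by simp_all
  have va: "kord_ge (1 - C) 0" using kord_ge_kord[of "1 - C"] a0 by simp
  have v48: "kord_ge (4 * (1 - C) * s + 8 * s^2) 2"
  proof -
    have "kord_ge (4 * (1 - C) * s) (2 + 0 + 0)"
      using kord_ge_4 C Ks vs va by (intro kord_ge_mult) auto
    moreover have "kord_ge (8 * s^2) (2 + int 2 * 0)"
      using kord_ge_8 kord_ge_power[OF Ks vs, of 2] Ks by (intro kord_ge_mult) auto
    ultimately show ?thesis using C Ks by (intro kord_ge_add) auto
  qed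
  have "T = (1 - C) + (4 * (1 - C) * s + 8 * s^2)" unfolding T_def by (simp add: algebra_simps)
  moreover have "kord_ge (4 * (1 - C) * s + 8 * s^2) (kord (1 - C) + 1)"
    using v48 a0 kord_ge_mono by simp
  ultimately have "T \<noteq> 0 \<and> kord T = kord (1 - C)"
    using kord_add_dominant[of "1 - C" "4 * (1 - C) * s + 8 * s^2"] a0 C Ks by simp
  hence T: "T \<in> Kf D" "T \<noteq> 0" "kord T = 0" unfolding T_def using a0 C Ks by simp_all
  have "z = 1 + 2*y" unfolding y_def by (simp add: field_simps)
  hence "z^4 - 2*C*z^2 + 1 = 2 * T" unfolding T_def s_def by (simp only: quartic_near_1_eq)
  hence XT: "2 * (z^4 - 2*C*z^2 + 1) = 4 * T" by simp
  have o4T: "kord (- (4*T)) = 2" using kord_mult[of 4 T] kord_4 T kord_uminus[of "4*T"] by simp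
  have "SG * w^2 - 4*T \<noteq> 0 \<and> kord (SG * w^2 - 4*T) \<le> 3"
  proof (cases "w \<noteq> 0 \<and> kord w = 1")
    case True
    \<comment> \<open>\<open>w = 2v\<close> with \<open>v\<close> a unit: the residual is \<open>4 SG (v\<^sup>2 + 1 + E)\<close> where \<open>4 | E\<close>\<close>
    define v where "v = w / 2"
    have Kv: "v \<in> Kf D" and wv: "w = 2 * v" unfolding v_def using w by simp_all
    define E where "E = - SG * T - 1"
    have KE: "E \<in> Kf D" unfolding E_def using SG T by simp
    have "kord_ge (SG * (4 * (1 - C) * s + 8 * s^2)) (0 + 2)"
      using kord_ge_kord[of SG] oSG v48 SG C Ks by (intro kord_ge_mult) auto
    moreover have "kord_ge (- (SG * (1 - C) + 1)) 2"
      using kord_ge_uminus[of "SG * (1 - C) + 1" 2] a SG C by simp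
    moreover have "E = - (SG * (1 - C) + 1) - SG * (4 * (1 - C) * s + 8 * s^2)"
      unfolding E_def T_def by (simp add: algebra_simps)
    ultimately have "kord_ge E 2" using SG C Ks by (simp add: kord_ge_diff)
    hence L: "v^2 + 1 + E \<noteq> 0 \<and> kord (v^2 + 1 + E) \<le> 1" by (rule kord_sq_plus_one_le_1[OF Kv KE])
    have eq: "SG * w^2 - 4*T = 4 * SG * (v^2 + 1 + E)"
      unfolding wv E_def using SG(2) by (simp add: algebra_simps power2_eq_square)
    have "kord (4 * SG * (v^2 + 1 + E)) = kord 4 + kord SG + kord (v^2 + 1 + E)"
      using kord_mult[of "4 * SG" "v^2 + 1 + E"] kord_mult[of 4 SG] SG SG0 Kv KE L by simp
    thus ?thesis unfolding eq using L SG0 kord_4 oSG by simp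
  next
    case False
    show ?thesis
    proof (cases "w = 0")
      case True thus ?thesis using o4T T by simp
    next
      case w0: False
      have "kord (SG * w^2) = 2 * kord w"
        using kord_mult[of SG "w^2"] kord_power[OF w w0, of 2] oSG SG0 w0 SG w by simp
      hence "kord (SG * w^2) \<noteq> kord (- (4*T))" using o4T False w0 by simp
      hence "SG * w^2 + - (4*T) \<noteq> 0 \<and> kord (SG * w^2 + - (4*T)) = min (kord (SG * w^2)) (kord (- (4*T)))"
        using SG0 w0 T SG w by (intro kord_add_distinct) auto
      thus ?thesis using o4T by (simp add: min_le_iff_disj)
    qed
  qed
  thus ?thesis unfolding XT .
qed

lemma not_loc_sol_twice_sign:
  assumes SG: "SG \<in> Kf D" "SG^2 = 1" and C: "C \<in> Kf D" "kord_ge C 1"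
    and a: "kord_ge (SG * (1 - C) + 1) 2"
    and g: "\<And>z. g (2*SG) z = 4 * (z^4 - 2*C*z^2 + 1)"
  shows "\<not> loc_sol D 2 g (2*SG)"
proof (rule not_loc_sol_of_residual_bound[where N = 4])
  fix z w assume z: "z \<in> Kf D" and w: "w \<in> Kf D"
  have SG0: "SG \<noteq> 0" and oSG: "kord SG = 0" using kord_sqrt_1[OF SG] by simp_all
  define X where "X = z^4 - 2*C*z^2 + 1"
  have KX: "X \<in> Kf D" unfolding X_def using z C by simp
  have "(X \<noteq> 0 \<and> even (kord X) \<and> kord X \<le> 0) \<or> kord_ge (z - 1) 1"
    using quartic_even_kord_or_near_1[OF C z] unfolding X_def .
  then have Q: "SG * w^2 - 2*X \<noteq> 0 \<and> kord (SG * w^2 - 2*X) \<le> 3"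
  proof
    assume XA: "X \<noteq> 0 \<and> even (kord X) \<and> kord X \<le> 0"
    \<comment> \<open>\<open>SG w\<^sup>2\<close> has even and \<open>2X\<close> odd valuation\<close>
    have o2X: "kord (- (2*X)) = 1 + kord X" using kord_mult[of 2 X] kord_2 XA KX kord_uminus[of "2*X"] by simp
    show ?thesis
    proof (cases "w = 0")
      case True thus ?thesis using o2X XA by simp
    next
      case False
      have "kord (SG * w^2) = 2 * kord w"
        using kord_mult[of SG "w^2"] kord_power[OF w False, of 2] oSG SG0 False SG w by simp
      moreover have "2 * kord w \<noteq> 1 + kord X"
      proof
        assume "2 * kord w = 1 + kord X"
        moreover have "even (2 * kord w)" by simp
        ultimately show False using XA by simp
      qed
      ultimately have "kord (SG * w^2) \<noteq> kord (- (2*X))" using o2X by simp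
      hence "SG * w^2 + - (2*X) \<noteq> 0 \<and> kord (SG * w^2 + - (2*X)) = min (kord (SG * w^2)) (kord (- (2*X)))"
        using SG0 False XA SG w KX by (intro kord_add_distinct) auto
      thus ?thesis using o2X XA by (simp add: min_le_iff_disj)
    qed
  next
    assume "kord_ge (z - 1) 1"
    thus ?thesis unfolding X_def by (rule residual_bound_near_1[OF SG C a z(1) _ w])
  qed
  have eq: "2 * SG * w^2 - g (2*SG) z = 2 * (SG * w^2 - 2*X)" unfolding g X_def by (simp add: algebra_simps)
  have KQ: "SG * w^2 - 2*X \<in> Kf D" using SG w KX by simp
  show "2 * SG * w^2 - g (2*SG) z \<noteq> 0 \<and> kord (2 * SG * w^2 - g (2*SG) z) \<le> 4"
    unfolding eq using kord_mult[OF _ KQ, of 2] kord_2 Q by simp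
qed

end

lemma inf_sol_of_zero_point:
  assumes "g d 0 = d^2"
  shows "inf_sol g d"
proof -
  have "d * (csqrt d)^2 = g d 0" unfolding power2_csqrt assms by (simp add: power2_eq_square)
  thus ?thesis unfolding inf_sol_def by blast
qed

lemma neg_one_quartic_factor:
  fixes c B u S P :: complex
  assumes "c \<noteq> 0" "c + B = S" "c * B = P"
  shows "(-1) * (0*u + 0)^2 - ((-1)^2 + S * (-1) * (inverse c * u + 0)^2 + P * (inverse c * u + 0)^4)
       = (u^2 - c) * (inverse c * (1 - B * u^2 * (inverse c)^2))"
  using assms(1) unfolding assms(2)[symmetric] assms(3)[symmetric]
  by (simp add: field_simps power2_eq_square power4_eq_xxxx)

section \<open>The Selmer groups\<close>

lemma not_dvd_small:
  assumes "l \<ge> 3" "\<bar>n\<bar> \<in> {1, 2}"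
  shows "\<not> int l dvd n"
proof
  assume "int l dvd n"
  hence "int l \<le> \<bar>n\<bar>" using assms(2) by (intro zdvd_imp_le) auto
  thus False using assms by auto
qed

locale twin_primes =
  fixes p q :: nat and D eps :: int
  assumes p_prime: "prime p" and q_prime: "prime q" and p_odd: "odd p" and q_odd: "odd q"
    and q_eq: "q = p + 2"
    and D_cases: "D \<in> {-11, -19, -43, -67, -163}"
    and p_inert: "inert D p" and q_inert: "inert D q" and eps_cases: "eps \<in> {1, -1}"
begin

lemma two_inert: "inert D 2"
proof -
  have "odd ((1 - D) div 4)" using D_cases by auto
  moreover have "even (x^2 - x)" for x :: int by (simp add: power2_eq_square)
  ultimately have "odd (x^2 - x + (1 - D) div 4)" for x :: int by simp
  thus ?thesis unfolding inert_def by (auto simp: cong_0_iff)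
qed

sublocale K2: inert_two D
  by unfold_locales (use D_cases two_inert in auto)
sublocale Kp: inert_place D p
  by unfold_locales (use D_cases p_inert in auto)
sublocale Kq: inert_place D q
  by unfold_locales (use D_cases q_inert in auto)

lemma p_ge_3: "p \<ge> 3" and q_ge_3: "q \<ge> 3"
  using p_prime p_odd prime_ge_2_nat[of p] q_eq by (cases "p = 2"; auto)+

lemma KS2_memI:
  assumes d: "d = (-1)^e * 2^a * of_nat p ^ b * of_nat q ^ c"
  shows "d \<in> KS2 D p q"
  unfolding KS2_def
proof (intro CollectI conjI)
  show "d \<in> Kf D" unfolding d by simp
  show "d \<noteq> 0" unfolding d using p_prime q_prime prime_gt_0_nat by auto
  show "\<exists>e a b c. \<exists>t\<in>Kf D. t \<noteq> 0 \<and> d = (-1)^e * 2^a * of_nat p ^ b * of_nat q ^ c * t^2"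
    by (rule exI[of _ e], rule exI[of _ a], rule exI[of _ b], rule exI[of _ c], rule bexI[of _ 1])
      (simp_all add: d)
qed

lemma KS2_nonzero: "d \<in> KS2 D p q \<Longrightarrow> d \<in> Kf D \<and> d \<noteq> 0"
  unfolding KS2_def by auto

lemma Sel_phiI:
  assumes "d \<in> KS2 D p q" "\<And>l. l \<in> {2, p, q} \<Longrightarrow> loc_sol D l (gphi eps p q) d"
  shows "d \<in> Sel_phi D eps p q"
  unfolding Sel_phi_def using assms inf_sol_of_zero_point[of "gphi eps p q" d]
  by (auto simp: gphi_def)

lemma Sel_phihatI:
  assumes "d \<in> KS2 D p q" "\<And>l. l \<in> {2, p, q} \<Longrightarrow> loc_sol D l (gphihat eps p q) d"
  shows "d \<in> Sel_phihat D eps p q"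
  unfolding Sel_phihat_def using assms inf_sol_of_zero_point[of "gphihat eps p q" d]
  by (auto simp: gphihat_def)

lemma gphi_eq: "gphi eps p q d z = d^2 + of_int (4 * (- eps * (int p + 1))) * d * z^2 + 4 * z^4"
  unfolding gphi_def q_eq by (simp add: algebra_simps)

lemma not_in_Sel_phi:
  assumes d: "d \<in> KS2 D p q" and "odd (ordv D p d) \<or> odd (ordv D q d) \<or> (\<exists>t \<in> Kf D. d = - (t^2))"
  shows "d \<notin> Sel_phi D eps p q"
proof -
  have dK: "d \<in> Kf D" "d \<noteq> 0" using KS2_nonzero[OF d] by auto
  define c :: complex where "c = of_int (- 2 * eps * (int p + int q))"
  have g: "gphi eps p q d z = d^2 + c * d * z^2 + 4 * z^4" for z
    unfolding gphi_def c_def by (simp add: algebra_simps)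
  have cK: "c \<in> Kf D" unfolding c_def by simp
  have "\<not> int p dvd 4" "\<not> int q dvd 4"
    using not_dvd_small[OF p_ge_3, of 2] not_dvd_small[OF q_ge_3, of 2]
      p_prime q_prime prime_dvd_mult_iff[of "int p" 2 2] prime_dvd_mult_iff[of "int q" 2 2] by auto
  hence unit4: "Kp.kord 4 = 0" "Kq.kord 4 = 0"
    using Kp.kord_of_int_unit[of 4] Kq.kord_of_int_unit[of 4] by simp_all
  have "\<not> loc_sol D p (gphi eps p q) d" if "odd (ordv D p d)"
    using that unit4 cK Kp.kord_ge_of_int[of "- 2 * eps * (int p + int q)", folded c_def]
    by (intro Kp.not_loc_sol_odd_kord[where g = "gphi eps p q" and c = c and e = 4, OF dK _ _ _ _ _ _ g])
      simp_all
  moreover have "\<not> loc_sol D q (gphi eps p q) d" if "odd (ordv D q d)"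
    using that unit4 cK Kq.kord_ge_of_int[of "- 2 * eps * (int p + int q)", folded c_def]
    by (intro Kq.not_loc_sol_odd_kord[where g = "gphi eps p q" and c = c and e = 4, OF dK _ _ _ _ _ _ g])
      simp_all
  moreover have "\<not> loc_sol D 2 (gphi eps p q) d" if "t \<in> Kf D" "d = - (t^2)" for t
    using K2.not_loc_sol_neg_square[where g = "gphi eps p q", OF that(1) _ gphi_eq] that(2) dK by auto
  ultimately show ?thesis using assms(2) unfolding Sel_phi_def by auto
qed

lemma twice_sign_in_Sel_phi_iff:
  assumes s: "s \<in> {1, -1}"
  shows "2 * of_int s \<in> Sel_phi D eps p q \<longleftrightarrow> (s - eps * (int p + 1)) mod 4 = 1"
proof -
  define C :: complex where "C = of_int (s * eps * (int p + 1))"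
  have s2: "(of_int s :: complex)^2 = 1" using s by auto
  have g: "gphi eps p q (2 * of_int s) z = 4 * (z^4 - 2*C*z^2 + 1)" for z
    unfolding gphi_def C_def q_eq using s by (auto simp: algebra_simps power2_eq_square)
  have C: "C \<in> Kf D" "K2.kord_ge C 1"
    unfolding C_def using K2.kord_ge_of_int_dvd[of 1 "s * eps * (int p + 1)"] p_odd by simp_all
  show ?thesis
  proof
    assume sel: "2 * of_int s \<in> Sel_phi D eps p q"
    show "(s - eps * (int p + 1)) mod 4 = 1"
    proof (rule ccontr)
      assume "(s - eps * (int p + 1)) mod 4 \<noteq> 1"
      hence "int 2 ^ 2 dvd s - eps * (int p + 1) + 1" using s eps_cases p_odd by auto presburger+
      hence "K2.kord_ge (of_int s * (1 - C) + 1) 2"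
        using K2.kord_ge_of_int_dvd[of 2 "s - eps * (int p + 1) + 1"] s eps_cases
        unfolding C_def by (auto simp: algebra_simps)
      hence "\<not> loc_sol D 2 (gphi eps p q) (2 * of_int s)"
        using K2.not_loc_sol_twice_sign[where g = "gphi eps p q", OF _ s2 C _ g] by simp
      thus False using sel unfolding Sel_phi_def by auto
    qed
  next
    assume c: "(s - eps * (int p + 1)) mod 4 = 1"
    have "loc_sol D 2 (gphi eps p q) (2 * of_int s)"
    proof (rule K2.loc_sol_of_sqrt_param[where c = "s - eps * (int p + 1)" and za = 0 and zb = 1
          and wa = 2 and wb = 0 and H = "\<lambda>_. 8 * of_int s"])
      fix u assume "u \<in> Kf D" "K2.kord_ge u 0"
      show "8 * of_int s \<in> Kf D \<and> K2.kord_ge (8 * of_int s) 0 \<and>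
          2 * of_int s * (2 * u + 0)^2 - gphi eps p q (2 * of_int s) (0 * u + 1)
          = (u^2 - of_int (s - eps * (int p + 1))) * (8 * of_int s)"
        using K2.kord_ge_of_int[of "8 * s"] s
        by (auto simp: gphi_def q_eq algebra_simps power2_eq_square)
    qed (use c K2.kord_ge_of_int[of 2] in simp_all)
    moreover have "loc_sol D l (gphi eps p q) (of_int (2 * s))" if "l \<in> {p, q}" for l
      using that s Kp.loc_sol_of_odd_unit[of "2 * s"] Kq.loc_sol_of_odd_unit[of "2 * s"]
        not_dvd_small[OF p_ge_3, of "2 * s"] not_dvd_small[OF q_ge_3, of "2 * s"]
        p_odd q_odd by (auto simp: gphi_def)
    moreover have "2 * of_int s \<in> KS2 D p q"
      using s KS2_memI[of _ 0 1 0 0] KS2_memI[of _ 1 1 0 0] by auto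
    ultimately show "2 * of_int s \<in> Sel_phi D eps p q" by (intro Sel_phiI) auto
  qed
qed

lemma two_in_Sel_phi_iff: "2 \<in> Sel_phi D eps p q \<longleftrightarrow> p mod 4 = 3"
proof -
  have "(1 - eps * (int p + 1)) mod 4 = 1 \<longleftrightarrow> p mod 4 = 3"
    using eps_cases p_odd by (elim insertE; simp) presburger+
  thus ?thesis using twice_sign_in_Sel_phi_iff[of 1] by simp
qed

lemma neg_two_in_Sel_phi_iff: "-2 \<in> Sel_phi D eps p q \<longleftrightarrow> p mod 4 = 1"
proof -
  have "(-1 - eps * (int p + 1)) mod 4 = 1 \<longleftrightarrow> p mod 4 = 1"
    using eps_cases p_odd by (elim insertE; simp) presburger+
  thus ?thesis using twice_sign_in_Sel_phi_iff[of "-1"] by simp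
qed

lemma not_in_Sel_phihat:
  assumes d: "d \<in> KS2 D p q" and odd: "odd (ordv D 2 d)"
  shows "d \<notin> Sel_phihat D eps p q"
proof -
  have dK: "d \<in> Kf D" "d \<noteq> 0" using KS2_nonzero[OF d] by auto
  define c :: complex where "c = of_int (eps * (int p + int q))"
  define e :: complex where "e = of_int (int p * int q)"
  have g: "gphihat eps p q d z = d^2 + c * d * z^2 + e * z^4" for z
    unfolding c_def e_def gphihat_def by (simp add: algebra_simps)
  have "\<not> int 2 dvd int p * int q" using p_odd q_odd by simp
  from K2.kord_of_int_unit[OF this] have e: "e \<noteq> 0" "K2.kord e = 0"
    unfolding e_def by (simp_all del: of_int_mult)
  have "e \<in> Kf D" "c \<in> Kf D" unfolding c_def e_def by simp_all
  hence "\<not> loc_sol D 2 (gphihat eps p q) d"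
    using K2.kord_ge_of_int[of "eps * (int p + int q)", folded c_def] e odd
    by (intro K2.not_loc_sol_odd_kord[where g = "gphihat eps p q" and c = c and e = e, OF dK _ _ _ _ _ _ g])
  thus ?thesis unfolding Sel_phihat_def by auto
qed

text \<open>At \<open>2\<close>: \<open>C'\<^sub>-\<^sub>1\<close> has the point \<open>(z, w) = (1/\<surd>c, 0)\<close>, where \<open>c\<close> is the factor of
  \<open>p q = (r - 1)(r + 1)\<close>, \<open>r = \<epsilon> (p + 1)\<close>, that is \<open>1\<close> modulo \<open>4\<close>.\<close>

lemma neg_one_in_Sel_phihat: "-1 \<in> Sel_phihat D eps p q"
proof (rule Sel_phihatI)
  show "-1 \<in> KS2 D p q" by (rule KS2_memI[of _ 1 0 0 0]) simp
  fix l assume l: "l \<in> {2, p, q}"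
  have odd_prime: "loc_sol D l (gphihat eps p q) (of_int (-1))" if "l \<in> {p, q}"
    using that Kp.loc_sol_of_odd_unit[of "-1"] Kq.loc_sol_of_odd_unit[of "-1"] p_odd q_odd
      not_dvd_small[OF p_ge_3, of "-1"] not_dvd_small[OF q_ge_3, of "-1"]
    by (auto simp: gphihat_def)
  define r where "r = eps * (int p + 1)"
  define c where "c = (if (1 + r) mod 4 = 1 then 1 + r else r - 1)"
  define B where "B = 2 * r - c"
  have "even r" unfolding r_def using p_odd by simp
  hence c4: "c mod 4 = 1" unfolding c_def by presburger
  hence c0: "(of_int c :: complex) \<noteq> 0" by auto
  have "(1 + r) * (r - 1) = int p * int q"
    unfolding r_def q_eq using eps_cases by (auto simp: algebra_simps)
  hence "c * B = int p * int q" unfolding B_def c_def by (auto simp: algebra_simps)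
  hence P: "(of_int c :: complex) * of_int B = of_nat p * of_nat q"
    by (metis of_int_mult of_int_of_nat_eq)
  have "c + B = eps * (int p + int q)" unfolding B_def r_def q_eq by (simp add: algebra_simps)
  hence S: "(of_int c :: complex) + of_int B = of_int eps * (of_nat p + of_nat q)"
    by (metis of_int_add of_int_mult of_int_of_nat_eq)
  have "\<not> int 2 dvd c" using c4 by presburger
  hence ic: "K2.kord_ge (inverse (of_int c)) 0"
    using K2.kord_inverse[of "of_int c"] K2.kord_of_int_unit[of c] unfolding K2.kord_ge_def by simp
  have "loc_sol D 2 (gphihat eps p q) (-1)"
  proof (rule K2.loc_sol_of_sqrt_param[where c = c and za = "inverse (of_int c)" and zb = 0
        and wa = 0 and wb = 0 and H = "\<lambda>u. inverse (of_int c) * (1 - of_int B * u^2 * (inverse (of_int c))^2)"])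
    fix u assume u: "u \<in> Kf D" "K2.kord_ge u 0"
    have "K2.kord_ge (of_int B * u^2 * (inverse (of_int c))^2) (0 + int 2 * 0 + int 2 * 0)"
      using K2.kord_ge_of_int[of B] K2.kord_ge_power[OF u, of 2] K2.kord_ge_power[OF _ ic, of 2] u
      by (intro K2.kord_ge_mult) auto
    hence "K2.kord_ge (inverse (of_int c) * (1 - of_int B * u^2 * (inverse (of_int c))^2)) (0 + 0)"
      using ic u K2.kord_ge_of_int[of 1] by (intro K2.kord_ge_mult K2.kord_ge_diff) auto
    thus "inverse (of_int c) * (1 - of_int B * u^2 * (inverse (of_int c))^2) \<in> Kf D \<and>
        K2.kord_ge (inverse (of_int c) * (1 - of_int B * u^2 * (inverse (of_int c))^2)) 0 \<and>
        -1 * (0*u + 0)^2 - gphihat eps p q (-1) (inverse (of_int c) * u + 0)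
        = (u^2 - of_int c) * (inverse (of_int c) * (1 - of_int B * u^2 * (inverse (of_int c))^2))"
      using u neg_one_quartic_factor[OF c0 S P, of u] by (simp add: gphihat_def)
  qed (use c4 ic K2.kord_ge_of_int[of 0] in simp_all)
  thus "loc_sol D l (gphihat eps p q) (-1)" using l odd_prime by auto
qed

lemma pq_mod_4: "(int p * int q) mod 4 = 3"
proof -
  obtain k where k: "p = 2*k + 1" using p_odd oddE by blast
  have "int p * int q = 4 * (int k * int k + 2 * int k) + 3" unfolding q_eq k by (simp add: algebra_simps)
  thus ?thesis by presburger
qed

lemma prime_in_Sel_phihat:
  assumes PQ: "(P = p \<and> Q = q) \<or> (P = q \<and> Q = p)"
  shows "of_nat P \<in> Sel_phihat D eps p q"
proof (rule Sel_phihatI)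
  have g: "gphihat eps p q (of_nat P) z = (of_nat P)^2 + of_int eps * (of_nat P + of_nat Q) * of_nat P * z^2
      + of_nat P * of_nat Q * z^4" for z
    using PQ unfolding gphihat_def by (auto simp: algebra_simps)
  show "of_nat P \<in> KS2 D p q" using PQ KS2_memI[of _ 0 0 1 0] KS2_memI[of _ 0 0 0 1] by auto
  have PQ_odd: "odd P" "odd Q" and PQ_mod_4: "(int P * int Q) mod 4 = 3"
    using PQ p_odd q_odd pq_mod_4 by (auto simp: mult.commute)
  have eps_unit: "\<not> int P dvd eps" "eps^2 = 1"
    using not_dvd_small[of P eps] PQ p_ge_3 q_ge_3 eps_cases by auto
  have QP: "\<not> int Q dvd int P"
  proof
    assume "int Q dvd int P"
    hence "Q dvd P" by simp
    thus False
      using PQ q_eq p_prime q_prime primes_dvd_imp_eq[of q p] primes_dvd_imp_eq[of p q] p_ge_3 by auto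
  qed
  have at_P: "loc_sol D P (gphihat eps p q) (of_nat P)"
    using PQ
  proof (elim disjE conjE)
    assume "P = p" "Q = q"
    thus ?thesis using Kp.loc_sol_prime_point[of eps "gphihat eps p q" Q] eps_unit g PQ_odd by simp
  next
    assume "P = q" "Q = p"
    thus ?thesis using Kq.loc_sol_prime_point[of eps "gphihat eps p q" Q] eps_unit g PQ_odd by simp
  qed
  have at_Q: "loc_sol D Q (gphihat eps p q) (of_nat P)"
    using PQ
  proof (elim disjE conjE)
    assume "P = p" "Q = q"
    thus ?thesis using Kq.loc_sol_of_odd_unit[of "int P" "gphihat eps p q"] QP PQ_odd by (simp add: gphihat_def)
  next
    assume "P = q" "Q = p"
    thus ?thesis using Kp.loc_sol_of_odd_unit[of "int P" "gphihat eps p q"] QP PQ_odd by (simp add: gphihat_def)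
  qed
  have at_2: "loc_sol D 2 (gphihat eps p q) (of_nat P)"
    using K2.loc_sol_two_prime[where g = "gphihat eps p q", OF PQ_odd PQ_mod_4 eps_cases g] .
  fix l assume "l \<in> {2, p, q}"
  thus "loc_sol D l (gphihat eps p q) (of_nat P)" using PQ at_P at_Q at_2 by auto
qed

end

theorem proposition2p5:
  fixes p q :: nat and D eps :: int
  assumes "prime p" "prime q" "odd p" "odd q" "q = p + 2"
    and "D \<in> {-11, -19, -43, -67, -163}"
    and "inert D p" "inert D q"
    and "eps \<in> {1, -1}"
  shows "(\<forall>d \<in> KS2 D p q. (odd (ordv D p d) \<or> odd (ordv D q d) \<or> (\<exists>t \<in> Kf D. d = - (t^2)))
            \<longrightarrow> d \<notin> Sel_phi D eps p q)
       \<and> ((2 \<in> Sel_phi D eps p q) \<longleftrightarrow> p mod 4 = 3)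
       \<and> ((-2 \<in> Sel_phi D eps p q) \<longleftrightarrow> p mod 4 = 1)
       \<and> (\<forall>d \<in> KS2 D p q. odd (ordv D 2 d) \<longrightarrow> d \<notin> Sel_phihat D eps p q)
       \<and> -1 \<in> Sel_phihat D eps p q \<and> of_nat p \<in> Sel_phihat D eps p q
       \<and> of_nat q \<in> Sel_phihat D eps p q"
proof -
  interpret twin_primes p q D eps by unfold_locales (use assms in auto)
  show ?thesis
    using not_in_Sel_phi two_in_Sel_phi_iff neg_two_in_Sel_phi_iff not_in_Sel_phihat
      neg_one_in_Sel_phihat prime_in_Sel_phihat[of p q] prime_in_Sel_phihat[of q p] by blast
qed

end
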